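(* Let $\Gamma\leq Tr_1(n,\mathbb{Z})$ be a finitely generated torsion-free nilpotent group with lattice hull $\Delta\leq Tr_1(n,\mathbb{Z})$, $p$ a prime, and $\Gamma_p,\Delta_p,L_p,R_p$ as in the context. Then $\log(\Delta_{p})=\mathbb{Z}_{p}\log(\Delta)\subseteq L_{p}$, where $\mathbb{Z}_{p}\log(\Delta)$ is the $\mathbb{Z}_p$-submodule of $L_p$ spanned by $\log(\Delta)$. In particular, $\log(\Delta_{p})$ is a $\mathbb{Z}_{p}$-lattice in $L_{p}$ and $\Gamma_{p}\leq\Delta_{p}\leq R_{p}$.
   Context: $\log,\exp$ are the mutually inverse maps between upper unitriangular matrices $Tr_1(n,\mathbb{Q}_p)$ and strictly upper triangular matrices $Tr_0(n,\mathbb{Q}_p)$. $L$ is the $\mathbb{Q}$-span of $\log\Gamma$ and $R=\exp(L)$. The lattice hull $\Delta$ is the unique minimal subgroup $\Gamma\leq\Delta\leq R$ such that $\log(\Delta)$ is a lattice in $L$ (a free $\mathbb{Z}$-module spanning $L$ over $\mathbb{Q}$); it is assumed that $\Delta\leq Tr_1(n,\mathbb{Z})$. $\Gamma_p$, $\Delta_p$ are the closures of $\Gamma,\Delta$ in $Tr_1(n,\mathbb{Z}_p)$. $L_p$ is the $\mathbb{Q}$-span of $\log(\Gamma_p)$, a $\mathbb{Q}_p$-Lie algebra, and $R_p=\exp(L_p)$, a group. A $\mathbb{Z}_p$-lattice in $L_p$ is a free $\mathbb{Z}_p$-module spanning $L_p$ over $\mathbb{Q}_p$. *)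

theory Defs
  imports Complex_Main "HOL-Computational_Algebra.Primes"
begin

text \<open>Square matrices of size n are functions nat => nat => 'a whose entries
vanish outside the index range {..<n} x {..<n}.  The ambient field 'k plays the
role of Q_p (characterised axiomatically below up to isometric isomorphism);
Q and Z are embedded in 'k via of_rat / of_int.\<close>

type_synonym 'a sqm = "nat \<Rightarrow> nat \<Rightarrow> 'a"

definition wfm :: "nat \<Rightarrow> 'a::zero sqm \<Rightarrow> bool" where
  "wfm n M \<longleftrightarrow> (\<forall>i j. (n \<le> i \<or> n \<le> j) \<longrightarrow> M i j = 0)"

definition mmul :: "nat \<Rightarrow> 'a::comm_ring_1 sqm \<Rightarrow> 'a sqm \<Rightarrow> 'a sqm" where
  "mmul n A B = (\<lambda>i j. \<Sum>k<n. A i k * B k j)"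

definition mid :: "nat \<Rightarrow> 'a::comm_ring_1 sqm" where
  "mid n = (\<lambda>i j. if i = j \<and> i < n then 1 else 0)"

definition mpow :: "nat \<Rightarrow> 'a::comm_ring_1 sqm \<Rightarrow> nat \<Rightarrow> 'a sqm" where
  "mpow n A k = ((mmul n A) ^^ k) (mid n)"

definition msub :: "'a::comm_ring_1 sqm \<Rightarrow> 'a sqm \<Rightarrow> 'a sqm" where
  "msub A B = (\<lambda>i j. A i j - B i j)"

text \<open>Matrix logarithm of a unipotent matrix and exponential of a nilpotent
matrix (finite series since (U - 1)^n = 0 resp. N^n = 0).\<close>

definition mlog :: "nat \<Rightarrow> 'a::field_char_0 sqm \<Rightarrow> 'a sqm" where
  "mlog n U = (\<lambda>i j. \<Sum>k\<in>{1..<n}.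
      ((-1) ^ (k + 1) / of_nat k) * mpow n (msub U (mid n)) k i j)"

definition mexp :: "nat \<Rightarrow> 'a::field_char_0 sqm \<Rightarrow> 'a sqm" where
  "mexp n N = (\<lambda>i j. \<Sum>k<n. (1 / of_nat (fact k)) * mpow n N k i j)"

definition Tr1 :: "nat \<Rightarrow> 'a::comm_ring_1 set \<Rightarrow> 'a sqm set" where
  "Tr1 n S = {M. wfm n M \<and> (\<forall>i<n. M i i = 1) \<and> (\<forall>i<n. \<forall>j<i. M i j = 0)
                 \<and> (\<forall>i<n. \<forall>j<n. M i j \<in> S)}"

definition is_mgroup :: "nat \<Rightarrow> 'a::comm_ring_1 sqm set \<Rightarrow> bool" where
  "is_mgroup n G \<longleftrightarrow> G \<subseteq> {M. wfm n M} \<and> mid n \<in> G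
     \<and> (\<forall>a\<in>G. \<forall>b\<in>G. mmul n a b \<in> G)
     \<and> (\<forall>a\<in>G. \<exists>b\<in>G. mmul n a b = mid n)"

definition mgen :: "nat \<Rightarrow> 'a::comm_ring_1 sqm set \<Rightarrow> 'a sqm set" where
  "mgen n S = \<Inter>{H. is_mgroup n H \<and> S \<subseteq> H}"

definition fin_gen :: "nat \<Rightarrow> 'a::comm_ring_1 sqm set \<Rightarrow> bool" where
  "fin_gen n G \<longleftrightarrow> (\<exists>F. finite F \<and> F \<subseteq> G \<and> G = mgen n F)"

definition torsion_free :: "nat \<Rightarrow> 'a::comm_ring_1 sqm set \<Rightarrow> bool" where
  "torsion_free n G \<longleftrightarrow> (\<forall>g\<in>G. \<forall>k>0. mpow n g k = mid n \<longrightarrow> g = mid n)"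

definition mcomms :: "nat \<Rightarrow> 'a::comm_ring_1 sqm set \<Rightarrow> 'a sqm set \<Rightarrow> 'a sqm set" where
  "mcomms n A B = {mmul n (mmul n (mmul n a b) a') b' | a b a' b'.
      a \<in> A \<and> b \<in> B \<and> wfm n a' \<and> wfm n b'
      \<and> mmul n a a' = mid n \<and> mmul n b b' = mid n}"

fun lcs :: "nat \<Rightarrow> 'a::comm_ring_1 sqm set \<Rightarrow> nat \<Rightarrow> 'a sqm set" where
  "lcs n G 0 = G"
| "lcs n G (Suc k) = mgen n (mcomms n G (lcs n G k))"

definition nilpotent_mgroup :: "nat \<Rightarrow> 'a::comm_ring_1 sqm set \<Rightarrow> bool" where
  "nilpotent_mgroup n G \<longleftrightarrow> (\<exists>k. lcs n G k = {mid n})"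

definition cspan :: "'a::field_char_0 set \<Rightarrow> 'a sqm set \<Rightarrow> 'a sqm set" where
  "cspan C S = {(\<lambda>i j. \<Sum>M\<in>F. c M * M i j) | F c.
                   finite F \<and> F \<subseteq> S \<and> (\<forall>M\<in>F. c M \<in> C)}"

abbreviation qspan :: "'a::field_char_0 sqm set \<Rightarrow> 'a sqm set" where
  "qspan S \<equiv> cspan \<rat> S"

abbreviation zspan :: "'a::field_char_0 sqm set \<Rightarrow> 'a sqm set" where
  "zspan S \<equiv> cspan \<int> S"

definition c_indep :: "'a::field_char_0 set \<Rightarrow> 'a sqm set \<Rightarrow> bool" where
  "c_indep C B \<longleftrightarrow> (\<forall>c. (\<forall>b\<in>B. c b \<in> C) \<longrightarrow>
       (\<lambda>i j. \<Sum>b\<in>B. c b * b i j) = (\<lambda>i j. 0) \<longrightarrow> (\<forall>b\<in>B. c b = 0))"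

definition is_lattice_in :: "'a::field_char_0 set \<Rightarrow> 'a set \<Rightarrow> 'a sqm set \<Rightarrow> 'a sqm set \<Rightarrow> bool" where
  "is_lattice_in C K S L \<longleftrightarrow>
     (\<exists>B. finite B \<and> c_indep C B \<and> S = cspan C B \<and> cspan K S = L)"

abbreviation Z_lattice :: "'a::field_char_0 sqm set \<Rightarrow> 'a sqm set \<Rightarrow> bool" where
  "Z_lattice S L \<equiv> is_lattice_in \<int> \<rat> S L"

definition Lie_L :: "nat \<Rightarrow> 'a::field_char_0 sqm set \<Rightarrow> 'a sqm set" where
  "Lie_L n G = qspan (mlog n ` G)"

definition Mal_R :: "nat \<Rightarrow> 'a::field_char_0 sqm set \<Rightarrow> 'a sqm set" where
  "Mal_R n G = mexp n ` Lie_L n G"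

definition lattice_hull :: "nat \<Rightarrow> 'a::field_char_0 sqm set \<Rightarrow> 'a sqm set \<Rightarrow> bool" where
  "lattice_hull n G D \<longleftrightarrow>
     is_mgroup n D \<and> G \<subseteq> D \<and> D \<subseteq> Mal_R n G \<and> Z_lattice (mlog n ` D) (Lie_L n G)
     \<and> (\<forall>D'. is_mgroup n D' \<and> G \<subseteq> D' \<and> D' \<subseteq> Mal_R n G
              \<and> Z_lattice (mlog n ` D') (Lie_L n G) \<longrightarrow> D \<subseteq> D')"

text \<open>Axiomatic characterisation of (Q_p, |.|_p): a field of characteristic 0 with
a non-archimedean absolute value that restricts to the p-adic absolute value on Q,
is complete, and in which Q is dense.  This determines (Q_p,|.|_p) up to
isometric isomorphism.\<close>

definition padic_absval :: "nat \<Rightarrow> ('k::field_char_0 \<Rightarrow> real) \<Rightarrow> bool" where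
  "padic_absval p av \<longleftrightarrow>
     (\<forall>x. 0 \<le> av x) \<and> (\<forall>x. av x = 0 \<longleftrightarrow> x = 0)
     \<and> (\<forall>x y. av (x * y) = av x * av y)
     \<and> (\<forall>x y. av (x + y) \<le> max (av x) (av y))
     \<and> av (of_nat p) = 1 / real p
     \<and> (\<forall>m::int. coprime m (int p) \<longrightarrow> av (of_int m) = 1)
     \<and> (\<forall>X::nat \<Rightarrow> 'k. (\<forall>e>0. \<exists>N. \<forall>m\<ge>N. \<forall>k\<ge>N. av (X m - X k) < e)
           \<longrightarrow> (\<exists>x. \<forall>e>0. \<exists>N. \<forall>m\<ge>N. av (X m - x) < e))
     \<and> (\<forall>x. \<forall>e>0. \<exists>q. av (x - of_rat q) < e)"

definition Zp :: "('k::field_char_0 \<Rightarrow> real) \<Rightarrow> 'k set" where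
  "Zp av = {x. av x \<le> 1}"

definition pclosure :: "('k::field_char_0 \<Rightarrow> real) \<Rightarrow> nat \<Rightarrow> 'k sqm set \<Rightarrow> 'k sqm set" where
  "pclosure av n S = {M \<in> Tr1 n (Zp av). \<forall>e>0. \<exists>g\<in>S. \<forall>i<n. \<forall>j<n. av (M i j - g i j) < e}"

end

theory Submission
  imports Defs "HOL-Computational_Algebra.Formal_Power_Series" "HOL-Library.Function_Algebras"
begin

text \<open>For matrices in \<open>Tr\<^sub>1(n, \<int>\<^sub>p)\<close> all relevant power series (logarithm, exponential,
inverse) are truncated at degree \<open>n\<close>, so \<open>log\<close>, \<open>exp\<close> and inversion are given by polynomials
with \<open>p\<close>-adically bounded coefficients and are uniformly Lipschitz for the entrywise sup norm.
Hence the closure of a group in \<open>Tr\<^sub>1(n, \<int>\<^sub>p)\<close> is a group, and since \<open>exp (m log g) = g\<^sup>m\<close>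
and \<open>\<nat>\<close> is dense in \<open>\<int>\<^sub>p\<close>, it contains \<open>exp (u log g)\<close> for every \<open>u \<in> \<int>\<^sub>p\<close>; in particular
\<open>L\<^sub>p\<close> is a \<open>\<rat>\<^sub>p\<close>-vector space.

Fix a \<open>\<int>\<close>-basis \<open>B\<close> of \<open>log \<Delta>\<close>. Its elements have rational entries, so \<open>\<int>\<close>-independence is
\<open>\<rat>\<close>-independence and \<open>B\<close> has a dual family of \<open>\<rat>\<close>-linear coordinate functionals, which are
\<open>p\<close>-adically continuous. A point of \<open>log \<Delta>\<^sub>p\<close> is a limit of integral combinations of \<open>B\<close>; its
coordinates are therefore limits of integers, lie in \<open>\<int>\<^sub>p\<close>, and the point is the
\<open>\<int>\<^sub>p\<close>-combination with these coordinates. Conversely, \<open>exp\<close> of a \<open>\<int>\<^sub>p\<close>-combination of \<open>B\<close>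
is the limit of \<open>exp\<close> of nearby integral combinations, which lie in \<open>\<Delta>\<close>.\<close>

unbundle fps_syntax

section \<open>Matrix power series\<close>

lemma mmul_assoc: "mmul n (mmul n A B) C = mmul n A (mmul n B C)"
  unfolding mmul_def
  by (auto simp: fun_eq_iff sum_distrib_left sum_distrib_right mult.assoc intro: sum.swap)

lemma wfm_mid [simp]: "wfm n (mid n)"
  by (simp add: wfm_def mid_def)

lemma wfm_mmul: "wfm n A \<Longrightarrow> wfm n B \<Longrightarrow> wfm n (mmul n A B)"
  by (auto simp: wfm_def mmul_def)

lemma wfm_msub: "wfm n A \<Longrightarrow> wfm n B \<Longrightarrow> wfm n (msub A B)"
  by (simp add: wfm_def msub_def)

lemma Tr1_imp_wfm: "U \<in> Tr1 n S \<Longrightarrow> wfm n U"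
  by (simp add: Tr1_def)

lemma Tr1_mono: "S \<subseteq> T \<Longrightarrow> Tr1 n S \<subseteq> Tr1 n T"
  by (auto simp: Tr1_def)

lemma mmul_mid_left: "wfm n A \<Longrightarrow> mmul n (mid n) A = A"
proof (intro ext)
  fix i j assume "wfm n A"
  have "mmul n (mid n) A i j = (\<Sum>k<n. if k = i then (if i < n then A i j else 0) else 0)"
    unfolding mmul_def mid_def by (intro sum.cong) auto
  also have "\<dots> = A i j" using \<open>wfm n A\<close> by (auto simp: wfm_def)
  finally show "mmul n (mid n) A i j = A i j" .
qed

lemma mmul_mid_right: "wfm n A \<Longrightarrow> mmul n A (mid n) = A"
proof (intro ext)
  fix i j assume "wfm n A"
  have "mmul n A (mid n) i j = (\<Sum>k<n. if k = j then (if j < n then A i j else 0) else 0)"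
    unfolding mmul_def mid_def by (intro sum.cong) auto
  also have "\<dots> = A i j" using \<open>wfm n A\<close> by (auto simp: wfm_def)
  finally show "mmul n A (mid n) i j = A i j" .
qed

lemma sum_swap3: "(\<Sum>l\<in>L. \<Sum>a\<in>A. \<Sum>b\<in>B. F l a b) = (\<Sum>a\<in>A. \<Sum>b\<in>B. \<Sum>l\<in>L. F l a b)"
  by (subst sum.swap) (rule sum.cong[OF refl], rule sum.swap)

lemma sum_apply2: "(sum F S :: 'a \<Rightarrow> 'b \<Rightarrow> 'c::comm_monoid_add) i j = (\<Sum>s\<in>S. F s i j)"
  by (induct S rule: infinite_finite_induct) auto

lemma mpow_0 [simp]: "mpow n A 0 = mid n"
  by (simp add: mpow_def)

lemma mpow_Suc: "mpow n A (Suc k) = mmul n A (mpow n A k)"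
  by (simp add: mpow_def)

lemma wfm_mpow: "wfm n A \<Longrightarrow> wfm n (mpow n A k)"
  by (induct k) (auto simp: mpow_Suc wfm_mmul)

lemma mpow_add: "wfm n A \<Longrightarrow> mpow n A (a + b) = mmul n (mpow n A a) (mpow n A b)"
  by (induct a) (auto simp: mpow_Suc mmul_mid_left wfm_mpow mmul_assoc)

lemma mgroup_mpow: "is_mgroup n G \<Longrightarrow> g \<in> G \<Longrightarrow> mpow n g m \<in> G"
  by (induct m) (auto simp: is_mgroup_def mpow_Suc)

definition strictly_upper :: "nat \<Rightarrow> 'a::zero sqm \<Rightarrow> bool" where
  "strictly_upper n N \<longleftrightarrow> wfm n N \<and> (\<forall>i j. j \<le> i \<longrightarrow> N i j = 0)"

lemma strictly_upper_imp_wfm: "strictly_upper n X \<Longrightarrow> wfm n X"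
  by (simp add: strictly_upper_def)

lemma strictly_upper_scale: "strictly_upper n (X::'a::comm_ring_1 sqm) \<Longrightarrow> strictly_upper n (\<lambda>i j. c * X i j)"
  by (auto simp: strictly_upper_def wfm_def)

lemma strictly_upper_lincomb:
  "(\<And>b. b \<in> B \<Longrightarrow> strictly_upper n (b::'a::comm_ring_1 sqm)) \<Longrightarrow> strictly_upper n (\<lambda>i j. \<Sum>b\<in>B. c b * b i j)"
  unfolding strictly_upper_def wfm_def by (auto intro!: sum.neutral) (metis mult_zero_right)+

lemma strictly_upper_msub_mid: "U \<in> Tr1 n S \<Longrightarrow> strictly_upper n (msub U (mid n))"
proof -
  assume "U \<in> Tr1 n S"
  then have U: "\<forall>i j. (n \<le> i \<or> n \<le> j) \<longrightarrow> U i j = 0" "\<forall>i<n. U i i = 1" "\<forall>i<n. \<forall>j<i. U i j = 0"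
    by (auto simp: Tr1_def wfm_def)
  have "U i j = (if i = j \<and> i < n then 1 else 0)" if "j \<le> i" for i j
    using U that by (cases "i < n"; cases "j = i") auto
  then show ?thesis using U(1) unfolding strictly_upper_def wfm_def msub_def mid_def by auto
qed

lemma strictly_upper_mpow_eq_0: "strictly_upper n N \<Longrightarrow> j < i + k \<Longrightarrow> mpow n N k i j = 0"
proof (induct k arbitrary: i j)
  case 0
  then show ?case by (simp add: mid_def)
next
  case (Suc k)
  have "N i l * mpow n N k l j = 0" for l
    using Suc by (cases "l \<le> i") (auto simp: strictly_upper_def)
  then show ?case by (simp add: mpow_Suc mmul_def)
qed

lemma strictly_upper_nilpotent: "strictly_upper n N \<Longrightarrow> n \<le> k \<Longrightarrow> mpow n N k = (\<lambda>i j. 0)"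
proof (intro ext)
  fix i j assume N: "strictly_upper n N" and k: "n \<le> k"
  have "wfm n (mpow n N k)" using N by (simp add: wfm_mpow strictly_upper_imp_wfm)
  then show "mpow n N k i j = 0"
    using strictly_upper_mpow_eq_0[OF N, of j i k] k by (cases "i < n \<and> j < n") (auto simp: wfm_def)
qed

text \<open>On strictly upper triangular matrices the truncation at degree \<open>n\<close> is invisible, so
evaluation is a ring homomorphism.\<close>

definition fps_meval :: "nat \<Rightarrow> 'a::comm_ring_1 sqm \<Rightarrow> 'a fps \<Rightarrow> 'a sqm" where
  "fps_meval n N f = (\<lambda>i j. \<Sum>k<n. f $ k * mpow n N k i j)"

lemma fps_meval_add: "fps_meval n N (f + g) = (\<lambda>i j. fps_meval n N f i j + fps_meval n N g i j)"
  by (simp add: fps_meval_def distrib_right sum.distrib)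

lemma fps_meval_diff: "fps_meval n N (f - g) = (\<lambda>i j. fps_meval n N f i j - fps_meval n N g i j)"
  by (simp add: fps_meval_def left_diff_distrib sum_subtractf)

lemma fps_meval_const_mult: "fps_meval n N (fps_const c * f) = (\<lambda>i j. c * fps_meval n N f i j)"
  by (simp add: fps_meval_def sum_distrib_left mult.assoc)

lemma fps_meval_1: "fps_meval n N 1 = mid n"
proof (intro ext)
  fix i j
  have "fps_meval n N 1 i j = (\<Sum>k<n. if k = 0 then mid n i j else 0)"
    unfolding fps_meval_def by (intro sum.cong) auto
  also have "\<dots> = mid n i j" by (auto simp: mid_def)
  finally show "fps_meval n N 1 i j = mid n i j" .
qed

lemma wfm_fps_meval: "wfm n N \<Longrightarrow> wfm n (fps_meval n N f)"
  using wfm_mpow[of n N] by (auto simp: wfm_def fps_meval_def)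

lemma strictly_upper_fps_meval:
  assumes N: "strictly_upper n N" and f0: "f $ 0 = 0"
  shows "strictly_upper n (fps_meval n N f)"
proof -
  have "fps_meval n N f i j = 0" if "j \<le> i" for i j
    unfolding fps_meval_def
  proof (rule sum.neutral, clarify)
    fix k
    show "f $ k * mpow n N k i j = 0"
      using f0 strictly_upper_mpow_eq_0[OF N, of j i k] that by (cases k) auto
  qed
  then show ?thesis using N by (simp add: strictly_upper_def wfm_fps_meval)
qed

lemma fps_meval_X: "strictly_upper n N \<Longrightarrow> fps_meval n N fps_X = N"
proof (intro ext)
  fix i j assume N: "strictly_upper n N"
  show "fps_meval n N fps_X i j = N i j"
  proof (cases "1 < n")
    case True
    have "fps_meval n N fps_X i j = (\<Sum>k<n. (if k = 1 then mpow n N 1 i j else 0))"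
      unfolding fps_meval_def by (intro sum.cong) (auto simp: fps_X_def)
    also have "\<dots> = N i j"
      using True N by (simp add: mpow_Suc mmul_mid_right strictly_upper_def)
    finally show ?thesis .
  next
    case False
    then have "N i j = 0" using N by (cases "i < n \<and> j < n") (auto simp: strictly_upper_def wfm_def)
    moreover have "fps_meval n N fps_X i j = 0"
      unfolding fps_meval_def using False by (intro sum.neutral) (auto simp: fps_X_def)
    ultimately show ?thesis by simp
  qed
qed

lemma fps_meval_mult:
  assumes N: "strictly_upper n N"
  shows "fps_meval n N (f * g) = mmul n (fps_meval n N f) (fps_meval n N g)"
proof (intro ext)
  fix i j
  have w: "wfm n N" using N by (simp add: strictly_upper_def)
  let ?h = "\<lambda>a b. f $ a * g $ b * mpow n N (a + b) i j"
  have "mmul n (fps_meval n N f) (fps_meval n N g) i j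
      = (\<Sum>l<n. (\<Sum>a<n. f $ a * mpow n N a i l) * (\<Sum>b<n. g $ b * mpow n N b l j))"
    by (simp add: mmul_def fps_meval_def)
  also have "\<dots> = (\<Sum>a<n. \<Sum>b<n. f $ a * g $ b * (\<Sum>l<n. mpow n N a i l * mpow n N b l j))"
  proof -
    have "\<And>l. (\<Sum>a<n. f $ a * mpow n N a i l) * (\<Sum>b<n. g $ b * mpow n N b l j)
       = (\<Sum>a<n. \<Sum>b<n. f $ a * g $ b * (mpow n N a i l * mpow n N b l j))"
      by (simp add: sum_product mult_ac)
    then have "(\<Sum>l<n. (\<Sum>a<n. f $ a * mpow n N a i l) * (\<Sum>b<n. g $ b * mpow n N b l j))
       = (\<Sum>l<n. \<Sum>a<n. \<Sum>b<n. f $ a * g $ b * (mpow n N a i l * mpow n N b l j))" by simp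
    also have "\<dots> = (\<Sum>a<n. \<Sum>b<n. \<Sum>l<n. f $ a * g $ b * (mpow n N a i l * mpow n N b l j))"
      by (rule sum_swap3)
    also have "\<dots> = (\<Sum>a<n. \<Sum>b<n. f $ a * g $ b * (\<Sum>l<n. mpow n N a i l * mpow n N b l j))"
      by (simp add: sum_distrib_left)
    finally show ?thesis .
  qed
  also have "\<dots> = (\<Sum>a<n. \<Sum>b<n. ?h a b)"
    using mpow_add[OF w] by (simp add: mmul_def)
  also have "\<dots> = (\<Sum>(a,b)\<in>{..<n}\<times>{..<n}. ?h a b)"
    by (simp add: sum.cartesian_product)
  also have "\<dots> = (\<Sum>(a,b)\<in>{(a,b). a + b < n}. ?h a b)"
  proof (rule sum.mono_neutral_right)
    show "\<forall>x\<in>{..<n} \<times> {..<n} - {(a, b). a + b < n}. (case x of (a, b) \<Rightarrow> ?h a b) = 0"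
    proof
      fix x assume "x \<in> {..<n} \<times> {..<n} - {(a, b). a + b < n}"
      then obtain a b where "x = (a,b)" "n \<le> a + b" by auto
      then show "(case x of (a,b) \<Rightarrow> ?h a b) = 0" using strictly_upper_nilpotent[OF N, of "a+b"] by simp
    qed
  qed auto
  also have "\<dots> = (\<Sum>k<n. \<Sum>a\<le>k. ?h a (k - a))"
    by (rule sum.triangle_reindex)
  also have "\<dots> = (\<Sum>k<n. (f * g) $ k * mpow n N k i j)"
    by (intro sum.cong refl) (simp add: fps_mult_nth atLeast0AtMost sum_distrib_right)
  finally show "fps_meval n N (f * g) i j = mmul n (fps_meval n N f) (fps_meval n N g) i j"
    by (simp add: fps_meval_def)
qed

lemma fps_meval_power: "strictly_upper n N \<Longrightarrow> fps_meval n N (f ^ k) = mpow n (fps_meval n N f) k"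
  by (induct k) (simp_all add: fps_meval_1 fps_meval_mult mpow_Suc)

lemma fps_meval_compose:
  assumes N: "strictly_upper n N" and g0: "g $ 0 = 0"
  shows "fps_meval n (fps_meval n N g) a = fps_meval n N (a oo g)"
proof (intro ext)
  fix i j
  have "fps_meval n (fps_meval n N g) a i j = (\<Sum>k<n. a $ k * (\<Sum>m<n. (g ^ k) $ m * mpow n N m i j))"
  proof -
    have P: "\<And>k. mpow n (fps_meval n N g) k = fps_meval n N (g^k)" by (simp add: fps_meval_power[OF N])
    show ?thesis by (simp only: fps_meval_def[of n "fps_meval n N g" a] P) (simp add: fps_meval_def)
  qed
  also have "\<dots> = (\<Sum>k<n. \<Sum>m<n. a $ k * (g ^ k) $ m * mpow n N m i j)"
    by (simp add: sum_distrib_left mult_ac)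
  also have "\<dots> = (\<Sum>m<n. \<Sum>k<n. a $ k * (g ^ k) $ m * mpow n N m i j)"
    by (rule sum.swap)
  also have "\<dots> = (\<Sum>m<n. (a oo g) $ m * mpow n N m i j)"
  proof (intro sum.cong refl)
    fix m assume m: "m \<in> {..<n}"
    have "(\<Sum>k<n. a $ k * (g ^ k) $ m) = (\<Sum>k\<in>{0..m}. a $ k * (g ^ k) $ m)"
    proof (rule sum.mono_neutral_right)
      show "\<forall>k\<in>{..<n} - {0..m}. a $ k * (g ^ k) $ m = 0"
        using startsby_zero_power_prefix[OF g0] by auto
    qed (use m in auto)
    then show "(\<Sum>k<n. a $ k * (g ^ k) $ m * mpow n N m i j) = (a oo g) $ m * mpow n N m i j"
      by (simp add: fps_compose_nth sum_distrib_right[symmetric])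
  qed
  finally show "fps_meval n (fps_meval n N g) a i j = fps_meval n N (a oo g) i j"
    by (simp add: fps_meval_def)
qed


lemma mlog_eq_fps_meval: "mlog n U = fps_meval n (msub U (mid n)) (fps_ln 1)"
proof (intro ext)
  fix i j
  have "mlog n U i j = (\<Sum>k\<in>{1..<n}. fps_ln 1 $ k * mpow n (msub U (mid n)) k i j)"
    unfolding mlog_def
  proof (intro sum.cong refl)
    fix k :: nat assume k: "k \<in> {1..<n}"
    then have "(-1::'a) ^ (k + 1) = (-1) ^ (k - 1)" by (cases k) auto
    then show "(-1) ^ (k + 1) / of_nat k * mpow n (msub U (mid n)) k i j
      = fps_ln 1 $ k * mpow n (msub U (mid n)) k i j"
      using k by (simp add: fps_ln_nth)
  qed
  also have "\<dots> = (\<Sum>k<n. fps_ln 1 $ k * mpow n (msub U (mid n)) k i j)"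
    by (intro sum.mono_neutral_left) (auto simp: not_less_eq_eq)
  finally show "mlog n U i j = fps_meval n (msub U (mid n)) (fps_ln 1) i j"
    by (simp add: fps_meval_def)
qed

lemma mexp_eq_fps_meval: "mexp n X = fps_meval n X (fps_exp 1)"
  by (simp add: mexp_def fps_meval_def)

lemma fps_meval_1_plus_X: "U \<in> Tr1 n S \<Longrightarrow> fps_meval n (msub U (mid n)) (1 + fps_X) = U"
  using strictly_upper_msub_mid[of U n S] by (auto simp: fps_meval_add fps_meval_1 fps_meval_X msub_def)

lemma wfm_mexp: "wfm n X \<Longrightarrow> wfm n (mexp n X)"
  unfolding mexp_eq_fps_meval by (rule wfm_fps_meval)

lemma wfm_mlog: "wfm n U \<Longrightarrow> wfm n (mlog n U)"
  unfolding mlog_eq_fps_meval by (rule wfm_fps_meval) (simp add: wfm_msub)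

lemma strictly_upper_mlog: "U \<in> Tr1 n (S::'a::field_char_0 set) \<Longrightarrow> strictly_upper n (mlog n U)"
  unfolding mlog_eq_fps_meval by (rule strictly_upper_fps_meval[OF strictly_upper_msub_mid]) auto

lemma fps_exp_compose_ln: "fps_exp (1::'a::field_char_0) oo fps_ln 1 = 1 + fps_X"
proof -
  let ?b = "fps_exp (1::'a) - 1"
  have "?b oo fps_inv ?b = fps_X" by (rule fps_inv_right) simp_all
  then have "?b oo fps_ln 1 = fps_X" using fps_ln_fps_exp_inv[of "1::'a"] by simp
  then show ?thesis by (simp add: fps_compose_sub_distrib algebra_simps)
qed

lemma fps_ln_compose_exp: "fps_ln (1::'a::field_char_0) oo (fps_exp 1 - 1) = fps_X"
proof -
  let ?b = "fps_exp (1::'a) - 1"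
  have "fps_inv ?b oo ?b = fps_X" by (rule fps_inv) simp_all
  then show ?thesis using fps_ln_fps_exp_inv[of "1::'a"] by simp
qed

lemma mexp_mlog: "U \<in> Tr1 n (S::'a::field_char_0 set) \<Longrightarrow> mexp n (mlog n U) = U"
  by (simp add: mexp_eq_fps_meval mlog_eq_fps_meval fps_meval_compose strictly_upper_msub_mid
      fps_exp_compose_ln fps_meval_1_plus_X)

lemma mlog_mexp:
  assumes X: "strictly_upper n (X::'a::field_char_0 sqm)"
  shows "mlog n (mexp n X) = X"
proof -
  have "msub (mexp n X) (mid n) = fps_meval n X (fps_exp 1 - 1)"
    by (simp add: mexp_eq_fps_meval fps_meval_diff fps_meval_1 msub_def)
  then show ?thesis
    by (simp add: mlog_eq_fps_meval fps_meval_compose[OF X] fps_ln_compose_exp fps_meval_X[OF X])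
qed

lemma mpow_mexp:
  assumes X: "strictly_upper n (X::'a::field_char_0 sqm)"
  shows "mpow n (mexp n X) m = mexp n (\<lambda>i j. of_nat m * X i j)"
proof -
  have "mpow n (mexp n X) m = fps_meval n X (fps_exp 1 ^ m)"
    by (simp add: mexp_eq_fps_meval fps_meval_power[OF X])
  also have "\<dots> = fps_meval n X (fps_exp 1 oo (fps_const (of_nat m) * fps_X))"
    by (simp add: fps_exp_power_mult)
  also have "\<dots> = mexp n (fps_meval n X (fps_const (of_nat m) * fps_X))"
    by (simp add: mexp_eq_fps_meval fps_meval_compose[OF X])
  also have "fps_meval n X (fps_const (of_nat m) * fps_X) = (\<lambda>i j. of_nat m * X i j)"
    by (simp add: fps_meval_const_mult fps_meval_X[OF X])
  finally show ?thesis .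
qed

definition minv :: "nat \<Rightarrow> 'a::field_char_0 sqm \<Rightarrow> 'a sqm" where
  "minv n U = fps_meval n (msub U (mid n)) (inverse (1 + fps_X))"

lemma wfm_minv: "U \<in> Tr1 n S \<Longrightarrow> wfm n (minv n U)"
  unfolding minv_def by (intro wfm_fps_meval strictly_upper_imp_wfm strictly_upper_msub_mid)

lemma
  assumes U: "U \<in> Tr1 n S"
  shows mmul_minv_right: "mmul n U (minv n U) = mid n"
    and mmul_minv_left: "mmul n (minv n U) U = mid n"
proof -
  let ?N = "msub U (mid n)"
  have N: "strictly_upper n ?N" by (rule strictly_upper_msub_mid[OF U])
  have "(1 + fps_X :: 'a fps) * inverse (1 + fps_X) = 1" by (rule inverse_mult_eq_1') simp
  then show "mmul n U (minv n U) = mid n"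
    using fps_meval_mult[OF N, of "1 + fps_X" "inverse (1 + fps_X)"]
    by (simp add: minv_def fps_meval_1 fps_meval_1_plus_X[OF U])
  have "inverse (1 + fps_X :: 'a fps) * (1 + fps_X) = 1" by (rule inverse_mult_eq_1) simp
  then show "mmul n (minv n U) U = mid n"
    using fps_meval_mult[OF N, of "inverse (1 + fps_X)" "1 + fps_X"]
    by (simp add: minv_def fps_meval_1 fps_meval_1_plus_X[OF U])
qed

lemma right_inverse_eq_minv:
  assumes U: "U \<in> Tr1 n S" and "wfm n V" and "mmul n U V = mid n"
  shows "V = minv n U"
proof -
  have "V = mmul n (mmul n (minv n U) U) V" using mmul_minv_left[OF U] mmul_mid_left[OF \<open>wfm n V\<close>] by simp
  also have "\<dots> = mmul n (minv n U) (mmul n U V)" by (rule mmul_assoc)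
  also have "\<dots> = minv n U" using assms mmul_mid_right[OF wfm_minv[OF U]] by simp
  finally show ?thesis .
qed

lemma Rats_mpow: "(\<And>i j. A i j \<in> \<rat>) \<Longrightarrow> mpow n A k i j \<in> \<rat>"
proof (induct k arbitrary: i j)
  case 0
  then show ?case by (simp add: mid_def)
next
  case (Suc k)
  then show ?case by (auto simp: mpow_Suc mmul_def intro!: Rats_sum Rats_mult)
qed

lemma mlog_Tr1_Ints_Rats: "U \<in> Tr1 n \<int> \<Longrightarrow> mlog n (U::'a::field_char_0 sqm) i j \<in> \<rat>"
proof -
  assume U: "U \<in> Tr1 n \<int>"
  have "msub U (mid n) i j \<in> \<rat>" for i j
  proof (cases "i < n \<and> j < n")
    case True
    then have "U i j \<in> \<int>" using U by (auto simp: Tr1_def)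
    then show ?thesis by (auto simp: msub_def mid_def intro: Ints_subset_Rats[THEN subsetD])
  next
    case False
    then show ?thesis using U by (auto simp: Tr1_def wfm_def msub_def mid_def)
  qed
  then show ?thesis unfolding mlog_def
    by (intro Rats_sum Rats_mult Rats_divide Rats_mpow) auto
qed


section \<open>\<open>p\<close>-adic absolute values\<close>

locale padic =
  fixes p :: nat and av :: "'k::field_char_0 \<Rightarrow> real"
  assumes prime_p: "prime p" and padic_av: "padic_absval p av"
begin

lemma av_nonneg [simp]: "0 \<le> av x"
  using padic_av by (simp add: padic_absval_def)

lemma av_eq_0_iff [simp]: "av x = 0 \<longleftrightarrow> x = 0"
  using padic_av by (simp add: padic_absval_def)

lemma av_mult: "av (x * y) = av x * av y"
  using padic_av by (simp add: padic_absval_def)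

lemma av_add_le_max: "av (x + y) \<le> max (av x) (av y)"
  using padic_av by (simp add: padic_absval_def)

lemma av_p: "av (of_nat p) = 1 / real p"
  using padic_av by (simp add: padic_absval_def)

lemma av_coprime: "coprime m (int p) \<Longrightarrow> av (of_int m) = 1"
  using padic_av by (simp add: padic_absval_def)

lemma rat_dense: "e > 0 \<Longrightarrow> \<exists>q. av (x - of_rat q) < e"
  using padic_av by (simp add: padic_absval_def)

lemma av_0 [simp]: "av 0 = 0"
  by simp

lemma av_pos_iff: "0 < av x \<longleftrightarrow> x \<noteq> 0"
  using av_nonneg[of x] av_eq_0_iff[of x] by linarith

lemma av_1 [simp]: "av 1 = 1"
proof -
  have "av 1 * (av 1 - 1) = 0" using av_mult[of 1 1] by (simp add: algebra_simps)
  then show ?thesis by simp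
qed

lemma av_minus [simp]: "av (- x) = av x"
proof -
  have "av (-1) * av (-1) = 1" using av_mult[of "-1" "-1"] by simp
  then have "(av (-1) - 1) * (av (-1) + 1) = 0" by (simp add: algebra_simps)
  then have "av (-1) = 1" using av_nonneg[of "-1"] by auto
  then show ?thesis using av_mult[of "-1" x] by simp
qed

lemma av_minus_commute: "av (x - y) = av (y - x)"
  using av_minus[of "y - x"] by simp

lemma av_add_le: "av x \<le> r \<Longrightarrow> av y \<le> r \<Longrightarrow> av (x + y) \<le> r"
  using av_add_le_max[of x y] by linarith

lemma av_diff_le: "av x \<le> r \<Longrightarrow> av y \<le> r \<Longrightarrow> av (x - y) \<le> r"
  using av_add_le[of x r "- y"] by simp

lemma av_diff_triangle: "av (x - z) \<le> max (av (x - y)) (av (y - z))"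
  using av_add_le_max[of "x - y" "y - z"] by simp

lemma av_sum_le: "(\<And>x. x \<in> S \<Longrightarrow> av (f x) \<le> r) \<Longrightarrow> 0 \<le> r \<Longrightarrow> av (sum f S) \<le> r"
  by (induct S rule: infinite_finite_induct) (simp_all add: av_add_le)

lemma av_power: "av (x ^ k) = av x ^ k"
  by (induct k) (simp_all add: av_mult)

lemma av_inverse: "av (inverse x) = inverse (av x)"
proof (cases "x = 0")
  case False
  then have "av x * av (inverse x) = 1" using av_mult[of x "inverse x"] by simp
  then show ?thesis using inverse_unique[of "av x" "av (inverse x)"] by simp
qed simp

lemma av_divide: "av (x / y) = av x / av y"
  by (simp add: divide_inverse av_mult av_inverse)

lemma av_of_nat_le_1: "av (of_nat m) \<le> 1"
  by (induct m) (simp_all add: av_add_le)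

lemma av_of_int_le_1: "av (of_int m) \<le> 1"
  by (cases m rule: int_cases) (use av_of_nat_le_1 in \<open>simp_all del: of_nat_Suc\<close>)

lemma av_Ints_le_1: "x \<in> \<int> \<Longrightarrow> av x \<le> 1"
  by (auto elim!: Ints_cases simp: av_of_int_le_1)

lemma av_zero_if_small: "(\<And>e. e > 0 \<Longrightarrow> av x \<le> e) \<Longrightarrow> x = 0"
proof (rule ccontr)
  assume small: "\<And>e. e > 0 \<Longrightarrow> av x \<le> e" and "x \<noteq> 0"
  then have "av x > 0" by (simp add: av_pos_iff)
  then show False using small[of "av x / 2"] by simp
qed

lemma Zp_iff: "x \<in> Zp av \<longleftrightarrow> av x \<le> 1"
  by (simp add: Zp_def)

lemma Ints_subset_Zp: "\<int> \<subseteq> Zp av"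
  by (auto simp: Zp_iff av_Ints_le_1)

lemma Zp_subring:
  "0 \<in> Zp av" "1 \<in> Zp av" "\<And>x y. x \<in> Zp av \<Longrightarrow> y \<in> Zp av \<Longrightarrow> x + y \<in> Zp av"
  "\<And>x y. x \<in> Zp av \<Longrightarrow> y \<in> Zp av \<Longrightarrow> x * y \<in> Zp av"
  by (simp_all add: Zp_iff av_add_le av_mult mult_le_one)

lemma p_gt_1: "1 < p"
  using prime_p prime_gt_1_nat by blast

lemma inverse_p_power_small: "e > 0 \<Longrightarrow> \<exists>K. (1 / real p) ^ K < e"
  using real_arch_pow_inv[of e "1 / real p"] p_gt_1 by auto

lemma av_p_power: "av (of_nat (p ^ K)) = (1 / real p) ^ K"
  by (simp only: of_nat_power av_power av_p)

lemma p_power_scale_into_Zp: "\<exists>K. av (of_nat (p ^ K) * x) \<le> 1"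
proof (cases "x = 0")
  case False
  then have "av x > 0" by (simp add: av_pos_iff)
  then obtain K where K: "(1 / real p) ^ K < 1 / av x"
    using inverse_p_power_small[of "1 / av x"] by auto
  have "av (of_nat (p ^ K) * x) = (1 / real p) ^ K * av x" by (simp only: av_mult av_p_power)
  also have "\<dots> \<le> 1" using K \<open>av x > 0\<close> by (simp add: field_simps)
  finally show ?thesis by blast
qed simp

lemma Zp_rat_denominator_coprime:
  assumes q: "quotient_of q = (a, b)" and Zp: "av (of_rat q) \<le> 1"
  shows "coprime b (int p)"
proof (rule ccontr)
  have pint: "prime (int p)" using prime_p by simp
  assume "\<not> coprime b (int p)"
  then have "int p dvd b" using prime_imp_coprime[OF pint] by (auto simp: coprime_commute)
  then obtain b' where b': "b = int p * b'" by (auto elim: dvdE)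
  have "\<not> int p dvd a"
  proof
    assume "int p dvd a"
    with \<open>int p dvd b\<close> have "int p dvd gcd a b" by simp
    with quotient_of_coprime[OF q] pint show False by (simp add: not_prime_unit)
  qed
  then have "av (of_int a :: 'k) = 1"
    using prime_imp_coprime[OF pint] av_coprime by (simp add: coprime_commute)
  moreover have "av (of_int b :: 'k) \<le> 1 / real p"
    using av_of_int_le_1[of b'] by (simp add: b' av_mult av_p mult_le_one divide_le_eq)
  moreover have "av (of_int b :: 'k) > 0"
    using quotient_of_denom_pos[OF q] by (simp add: av_pos_iff)
  moreover have "(of_rat q :: 'k) = of_int a / of_int b"
    using quotient_of_div[OF q] by (simp add: of_rat_divide)
  ultimately have "av (of_rat q :: 'k) \<ge> real p"
    using p_gt_1 by (simp add: av_divide field_simps)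
  with Zp p_gt_1 show False by simp
qed

lemma int_fraction_near_nat:
  assumes b: "coprime b (int p)" "b \<noteq> 0"
  shows "\<exists>m::nat. av (of_int a / of_int b - of_nat m) \<le> (1 / real p) ^ K"
proof -
  define P :: int where "P = int p ^ K"
  have "P > 0" using p_gt_1 by (simp add: P_def)
  have "coprime b P" unfolding P_def using b(1) by simp
  then obtain u v where uv: "u * b + v * P = 1" using bezout_int[of b P] by auto
  define m where "m = (a * u) mod P"
  define k where "k = (a * u) div P"
  have "m \<ge> 0" using \<open>P > 0\<close> by (simp add: m_def)
  have au: "a * u = P * k + m" by (simp add: m_def k_def)
  have "a - b * m = a - b * (a * u - P * k)" using au by simp
  also have "\<dots> = a * (1 - u * b) + b * P * k" by (simp add: algebra_simps)
  also have "1 - u * b = v * P" using uv by simp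
  also have "a * (v * P) + b * P * k = P * (a * v + b * k)" by (simp add: algebra_simps)
  finally have key: "a - b * m = P * (a * v + b * k)" .
  have "(of_int a / of_int b :: 'k) - of_nat (nat m) = of_int (a - b * m) / of_int b"
    using b(2) \<open>m \<ge> 0\<close> by (simp add: field_simps)
  also have "\<dots> = of_int P * of_int (a * v + b * k) / of_int b"
    by (simp only: key of_int_mult)
  finally have "av ((of_int a / of_int b :: 'k) - of_nat (nat m))
      = av (of_int P :: 'k) * av (of_int (a * v + b * k) :: 'k)"
    using av_coprime[OF b(1)] by (simp add: av_divide av_mult)
  also have "\<dots> \<le> av (of_int P :: 'k)"
    using av_of_int_le_1[of "a * v + b * k"] by (simp add: mult_left_le)
  also have "av (of_int P :: 'k) = (1 / real p) ^ K"
    using av_p_power[of K] by (simp add: P_def)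
  finally show ?thesis by blast
qed

lemma nat_dense_in_Zp:
  assumes x: "av x \<le> 1" and e: "e > 0"
  shows "\<exists>m::nat. av (x - of_nat m) < e"
proof -
  obtain K where K: "(1 / real p) ^ K < e" using inverse_p_power_small[OF e] by auto
  obtain q where q: "av (x - of_rat q) < min e 1" using rat_dense[of "min e 1" x] e by auto
  have "av (x - (x - of_rat q)) \<le> 1" using av_diff_le[of x 1 "x - of_rat q"] x q by linarith
  then have "av (of_rat q :: 'k) \<le> 1" by simp
  obtain a b where ab: "quotient_of q = (a, b)" by (cases "quotient_of q") auto
  have "coprime b (int p)" by (rule Zp_rat_denominator_coprime[OF ab \<open>av (of_rat q) \<le> 1\<close>])
  moreover have "b \<noteq> 0" using quotient_of_denom_pos[OF ab] by simp
  ultimately obtain m :: nat where "av (of_int a / of_int b - of_nat m :: 'k) \<le> (1 / real p) ^ K"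
    using int_fraction_near_nat[of b a K] by blast
  moreover have "(of_rat q :: 'k) = of_int a / of_int b"
    using quotient_of_div[OF ab] by (simp add: of_rat_divide)
  ultimately have "av (of_rat q - of_nat m :: 'k) < e" using K by simp
  then have "av (x - of_nat m) < e" using av_diff_triangle[of x "of_nat m" "of_rat q"] q by linarith
  then show ?thesis by blast
qed

end


lemma exists_pos_mult_le: "0 \<le> (C::real) \<Longrightarrow> 0 < e \<Longrightarrow> \<exists>d>0. C * d \<le> e"
  by (rule exI[of _ "e / (C + 1)"]) (simp add: field_simps)

section \<open>Entrywise \<open>p\<close>-adic estimates for matrices\<close>

context padic
begin

definition mbound :: "nat \<Rightarrow> 'k sqm \<Rightarrow> real \<Rightarrow> bool" where
  "mbound n M r \<longleftrightarrow> (\<forall>i<n. \<forall>j<n. av (M i j) \<le> r)"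

lemma mbound_mono: "mbound n M r \<Longrightarrow> r \<le> s \<Longrightarrow> mbound n M s"
  by (auto simp: mbound_def intro: order_trans)

lemma mbound_mid: "mbound n (mid n) 1"
  by (simp add: mbound_def mid_def)

lemma mbound_scale: "mbound n M r \<Longrightarrow> mbound n (\<lambda>i j. c * M i j) (av c * r)"
  by (auto simp: mbound_def av_mult intro: mult_left_mono)

lemma mbound_scale_Zp: "mbound n M r \<Longrightarrow> av c \<le> 1 \<Longrightarrow> mbound n (\<lambda>i j. c * M i j) r"
  by (auto simp: mbound_def av_mult intro: order_trans[OF mult_left_le_one_le])

lemma mbound_mmul:
  "mbound n A r \<Longrightarrow> mbound n B s \<Longrightarrow> 0 \<le> r \<Longrightarrow> 0 \<le> s \<Longrightarrow> mbound n (mmul n A B) (r * s)"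
  unfolding mbound_def mmul_def by (auto simp: av_mult intro!: av_sum_le mult_mono)

lemma mbound_mpow: "mbound n A R \<Longrightarrow> 0 \<le> R \<Longrightarrow> mbound n (mpow n A k) (R ^ k)"
  by (induct k) (simp_all add: mbound_mid mpow_Suc mbound_mmul)

lemma mbound_sum:
  assumes "\<And>k. k \<in> S \<Longrightarrow> mbound n (F k) (r k)" "\<And>k. k \<in> S \<Longrightarrow> 0 \<le> r k"
  shows "mbound n (\<lambda>i j. \<Sum>k\<in>S. F k i j) (\<Sum>k\<in>S. r k)"
  unfolding mbound_def
proof (intro allI impI)
  fix i j assume ij: "i < n" "j < n"
  show "av (\<Sum>k\<in>S. F k i j) \<le> (\<Sum>k\<in>S. r k)"
  proof (cases "finite S")
    case True
    show ?thesis
    proof (rule av_sum_le)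
      fix k assume k: "k \<in> S"
      have "av (F k i j) \<le> r k" using assms(1)[OF k] ij by (simp add: mbound_def)
      also have "\<dots> \<le> (\<Sum>k\<in>S. r k)" using True k assms(2) by (intro member_le_sum) auto
      finally show "av (F k i j) \<le> (\<Sum>k\<in>S. r k)" .
    qed (use assms(2) in \<open>simp add: sum_nonneg\<close>)
  qed simp
qed

lemma mbound_lincomb:
  assumes "\<And>b. b \<in> B \<Longrightarrow> mbound n b R" "\<And>b. b \<in> B \<Longrightarrow> av (c b) \<le> r" "0 \<le> R" "0 \<le> r"
  shows "mbound n (\<lambda>i j. \<Sum>b\<in>B. c b * b i j) (r * R)"
  using assms unfolding mbound_def
  by (auto simp: av_mult intro!: av_sum_le mult_mono)

lemma mbound_mmul_diff:
  assumes A: "mbound n A R1" "mbound n (msub A A') d1"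
    and B: "mbound n B' R2" "mbound n (msub B B') d2"
    and nonneg: "0 \<le> R1" "0 \<le> R2" "0 \<le> d1" "0 \<le> d2"
  shows "mbound n (msub (mmul n A B) (mmul n A' B')) (max (R1 * d2) (d1 * R2))"
  unfolding mbound_def
proof (intro allI impI)
  fix i j assume ij: "i < n" "j < n"
  have "msub (mmul n A B) (mmul n A' B') i j
      = (\<Sum>l<n. A i l * msub B B' l j + msub A A' i l * B' l j)"
    by (simp add: msub_def mmul_def sum_subtractf[symmetric] algebra_simps)
  also have "av \<dots> \<le> max (R1 * d2) (d1 * R2)"
  proof (rule av_sum_le)
    fix l assume "l \<in> {..<n}"
    then have "av (A i l * msub B B' l j) \<le> R1 * d2" "av (msub A A' i l * B' l j) \<le> d1 * R2"
      using A B ij nonneg unfolding mbound_def by (auto simp: av_mult intro!: mult_mono)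
    then show "av (A i l * msub B B' l j + msub A A' i l * B' l j) \<le> max (R1 * d2) (d1 * R2)"
      by (intro av_add_le) auto
  qed (use nonneg in \<open>auto simp: le_max_iff_disj\<close>)
  finally show "av (msub (mmul n A B) (mmul n A' B') i j) \<le> max (R1 * d2) (d1 * R2)" .
qed

lemma mbound_mpow_diff:
  assumes "mbound n A R" "mbound n B R" "1 \<le> R" "mbound n (msub A B) d" "0 \<le> d"
  shows "mbound n (msub (mpow n A k) (mpow n B k)) (R ^ k * d)"
proof (induct k)
  case 0
  then show ?case using assms by (simp add: mbound_def msub_def)
next
  case (Suc k)
  have "mbound n (mpow n B k) (R ^ k)" using mbound_mpow assms by simp
  then have "mbound n (msub (mmul n A (mpow n A k)) (mmul n B (mpow n B k)))
      (max (R * (R ^ k * d)) (d * R ^ k))"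
    using Suc assms by (intro mbound_mmul_diff) auto
  moreover have "d * R ^ k \<le> R * (R ^ k * d)"
    using mult_right_mono[of 1 R "d * R ^ k"] assms by (simp add: mult_ac)
  ultimately show ?case by (simp add: mpow_Suc mbound_mono mult_ac)
qed

lemma mbound_eq:
  assumes "wfm n A" "wfm n B" "\<And>e. e > 0 \<Longrightarrow> mbound n (msub A B) e"
  shows "A = B"
proof (intro ext)
  fix i j
  show "A i j = B i j"
  proof (cases "i < n \<and> j < n")
    case True
    then have "A i j - B i j = 0"
      using assms(3) by (intro av_zero_if_small) (auto simp: mbound_def msub_def)
    then show ?thesis by simp
  next
    case False
    then show ?thesis using assms(1,2) by (auto simp: wfm_def)
  qed
qed

lemma Tr1_Zp_mbound: "U \<in> Tr1 n (Zp av) \<Longrightarrow> mbound n U 1"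
  by (auto simp: Tr1_def mbound_def Zp_iff)

lemma Tr1_Zp_mbound_msub_mid: "U \<in> Tr1 n (Zp av) \<Longrightarrow> mbound n (msub U (mid n)) 1"
  by (auto simp: Tr1_def mbound_def Zp_iff msub_def mid_def intro: av_diff_le)

lemma Tr1_Ints_subset_Tr1_Zp: "Tr1 n \<int> \<subseteq> Tr1 n (Zp av)"
  using Tr1_mono Ints_subset_Zp by blast

definition fps_bound :: "nat \<Rightarrow> 'k fps \<Rightarrow> real \<Rightarrow> real" where
  "fps_bound n f R = (\<Sum>k<n. av (f $ k) * R ^ k)"

lemma fps_bound_nonneg: "0 \<le> R \<Longrightarrow> 0 \<le> fps_bound n f R"
  by (simp add: fps_bound_def sum_nonneg)

lemma mbound_fps_meval: "mbound n A R \<Longrightarrow> 0 \<le> R \<Longrightarrow> mbound n (fps_meval n A f) (fps_bound n f R)"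
  unfolding fps_meval_def fps_bound_def by (rule mbound_sum) (auto intro!: mbound_scale mbound_mpow)

lemma mbound_fps_meval_diff:
  assumes "mbound n A R" "mbound n B R" "1 \<le> R" "mbound n (msub A B) d" "0 \<le> d"
  shows "mbound n (msub (fps_meval n A f) (fps_meval n B f)) (fps_bound n f R * d)"
proof -
  have "msub (fps_meval n A f) (fps_meval n B f)
      = (\<lambda>i j. \<Sum>k<n. f $ k * msub (mpow n A k) (mpow n B k) i j)"
    by (simp add: fps_meval_def msub_def sum_subtractf[symmetric] algebra_simps)
  moreover have "mbound n (\<lambda>i j. \<Sum>k<n. f $ k * msub (mpow n A k) (mpow n B k) i j)
      (\<Sum>k<n. av (f $ k) * (R ^ k * d))"
    using assms by (intro mbound_sum mbound_scale mbound_mpow_diff) auto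
  ultimately show ?thesis by (simp add: fps_bound_def sum_distrib_left sum_distrib_right mult_ac)
qed

lemma mbound_mlog: "U \<in> Tr1 n (Zp av) \<Longrightarrow> mbound n (mlog n U) (fps_bound n (fps_ln 1) 1)"
  unfolding mlog_eq_fps_meval by (intro mbound_fps_meval Tr1_Zp_mbound_msub_mid) auto

lemma msub_msub_mid: "msub (msub U (mid n)) (msub V (mid n)) = msub U V"
  by (simp add: msub_def)

lemma mlog_lipschitz:
  assumes "U \<in> Tr1 n (Zp av)" "V \<in> Tr1 n (Zp av)" "mbound n (msub U V) d" "0 \<le> d"
  shows "mbound n (msub (mlog n U) (mlog n V)) (fps_bound n (fps_ln 1) 1 * d)"
  unfolding mlog_eq_fps_meval using assms
  by (intro mbound_fps_meval_diff) (auto simp: msub_msub_mid Tr1_Zp_mbound_msub_mid)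

lemma minv_lipschitz:
  assumes "U \<in> Tr1 n (Zp av)" "V \<in> Tr1 n (Zp av)" "mbound n (msub U V) d" "0 \<le> d"
  shows "mbound n (msub (minv n U) (minv n V)) (fps_bound n (inverse (1 + fps_X)) 1 * d)"
  unfolding minv_def using assms
  by (intro mbound_fps_meval_diff) (auto simp: msub_msub_mid Tr1_Zp_mbound_msub_mid)

lemma mexp_lipschitz:
  assumes "mbound n X R" "mbound n Y R" "1 \<le> R" "mbound n (msub X Y) d" "0 \<le> d"
  shows "mbound n (msub (mexp n X) (mexp n Y)) (fps_bound n (fps_exp 1) R * d)"
  unfolding mexp_eq_fps_meval using assms by (rule mbound_fps_meval_diff)

end


section \<open>Closures of matrix groups in \<open>Tr\<^sub>1(n, \<int>\<^sub>p)\<close>\<close>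

context padic
begin

definition adherent :: "nat \<Rightarrow> 'k sqm set \<Rightarrow> 'k sqm \<Rightarrow> bool" where
  "adherent n S M \<longleftrightarrow> (\<forall>e>0. \<exists>g\<in>S. mbound n (msub M g) e)"

lemma pclosure_iff_adherent: "M \<in> pclosure av n S \<longleftrightarrow> M \<in> Tr1 n (Zp av) \<and> adherent n S M"
proof
  assume M: "M \<in> pclosure av n S"
  have "adherent n S M" unfolding adherent_def
  proof (intro allI impI)
    fix e :: real assume "e > 0"
    then obtain g where "g \<in> S" "\<forall>i<n. \<forall>j<n. av (M i j - g i j) < e"
      using M by (auto simp: pclosure_def)
    then show "\<exists>g\<in>S. mbound n (msub M g) e" unfolding mbound_def msub_def by (meson less_imp_le)
  qed
  then show "M \<in> Tr1 n (Zp av) \<and> adherent n S M" using M by (simp add: pclosure_def)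
next
  assume M: "M \<in> Tr1 n (Zp av) \<and> adherent n S M"
  have "\<exists>g\<in>S. \<forall>i<n. \<forall>j<n. av (M i j - g i j) < e" if "e > 0" for e
  proof -
    have "\<exists>g\<in>S. mbound n (msub M g) (e / 2)" using M \<open>e > 0\<close> unfolding adherent_def by simp
    then obtain g where "g \<in> S" "mbound n (msub M g) (e / 2)" by blast
    then show ?thesis using \<open>e > 0\<close> by (force simp: mbound_def msub_def)
  qed
  then show "M \<in> pclosure av n S" using M by (simp add: pclosure_def)
qed

lemma pclosure_subset_Tr1_Zp: "pclosure av n S \<subseteq> Tr1 n (Zp av)"
  by (auto simp: pclosure_def)

lemma adherent_Tr1_Zp:
  assumes M: "wfm n M" "adherent n S M" and S: "S \<subseteq> Tr1 n (Zp av)"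
  shows "M \<in> Tr1 n (Zp av)"
proof -
  have approx: "\<exists>g\<in>Tr1 n (Zp av). av (M i j - g i j) \<le> e" if ij: "i < n" "j < n" and "e > 0" for i j e
  proof -
    have "\<exists>g\<in>S. mbound n (msub M g) e" using M(2) \<open>e > 0\<close> unfolding adherent_def by simp
    then obtain g where "g \<in> S" "mbound n (msub M g) e" by blast
    then show ?thesis using S ij by (auto simp: mbound_def msub_def)
  qed
  have "M i i = 1" if "i < n" for i
  proof -
    have "M i i - 1 = 0"
    proof (rule av_zero_if_small)
      fix e :: real assume "e > 0"
      then obtain g where "g \<in> Tr1 n (Zp av)" "av (M i i - g i i) \<le> e" using approx \<open>i < n\<close> by blast
      then show "av (M i i - 1) \<le> e" using \<open>i < n\<close> by (simp add: Tr1_def)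
    qed
    then show ?thesis by simp
  qed
  moreover have "M i j = 0" if ij: "i < n" "j < i" for i j
  proof (rule av_zero_if_small)
    fix e :: real assume "e > 0"
    moreover have "j < n" using ij by simp
    ultimately obtain g where "g \<in> Tr1 n (Zp av)" "av (M i j - g i j) \<le> e" using approx ij by blast
    then show "av (M i j) \<le> e" using ij by (simp add: Tr1_def)
  qed
  moreover have "M i j \<in> Zp av" if ij: "i < n" "j < n" for i j
  proof -
    obtain g where g: "g \<in> Tr1 n (Zp av)" "av (M i j - g i j) \<le> 1" using approx[OF ij] by force
    then have "av (g i j) \<le> 1" using ij by (simp add: Tr1_def Zp_iff)
    then have "av ((M i j - g i j) + g i j) \<le> 1" using g by (intro av_add_le) auto
    then show ?thesis by (simp add: Zp_iff)
  qed
  ultimately show ?thesis using M(1) by (simp add: Tr1_def)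
qed

lemma pclosureI: "wfm n M \<Longrightarrow> adherent n S M \<Longrightarrow> S \<subseteq> Tr1 n (Zp av) \<Longrightarrow> M \<in> pclosure av n S"
  using adherent_Tr1_Zp pclosure_iff_adherent by blast

lemma adherent_self: "g \<in> S \<Longrightarrow> adherent n S g"
  unfolding adherent_def by (intro allI impI bexI[of _ g]) (auto simp: mbound_def msub_def)

lemma pclosure_superset: "S \<subseteq> Tr1 n (Zp av) \<Longrightarrow> S \<subseteq> pclosure av n S"
  using pclosure_iff_adherent adherent_self by blast

lemma pclosure_mono: "S \<subseteq> T \<Longrightarrow> pclosure av n S \<subseteq> pclosure av n T"
  by (auto simp: pclosure_def) (meson subsetD)

lemma pclosure_mmul:
  assumes G: "is_mgroup n G" "G \<subseteq> Tr1 n (Zp av)"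
    and a: "a \<in> pclosure av n G" and b: "b \<in> pclosure av n G"
  shows "mmul n a b \<in> pclosure av n G"
proof (rule pclosureI[OF _ _ G(2)])
  have aT: "a \<in> Tr1 n (Zp av)" and bT: "b \<in> Tr1 n (Zp av)"
    using a b by (simp_all add: pclosure_iff_adherent)
  then show "wfm n (mmul n a b)" by (intro wfm_mmul Tr1_imp_wfm)
  show "adherent n G (mmul n a b)" unfolding adherent_def
  proof (intro allI impI)
    fix e :: real assume "e > 0"
    then obtain g h where "g \<in> G" "mbound n (msub a g) e" "h \<in> G" "mbound n (msub b h) e"
      using a b by (meson adherent_def pclosure_iff_adherent)
    moreover from this have "mbound n (msub (mmul n a b) (mmul n g h)) (max (1 * e) (e * 1))"
      using aT G(2) \<open>e > 0\<close> by (intro mbound_mmul_diff Tr1_Zp_mbound) auto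
    moreover have "mmul n g h \<in> G" using G \<open>g \<in> G\<close> \<open>h \<in> G\<close> by (auto simp: is_mgroup_def)
    ultimately show "\<exists>g\<in>G. mbound n (msub (mmul n a b) g) e" by auto
  qed
qed

lemma pclosure_minv:
  assumes G: "is_mgroup n G" "G \<subseteq> Tr1 n (Zp av)" and a: "a \<in> pclosure av n G"
  shows "minv n a \<in> pclosure av n G"
proof (rule pclosureI[OF _ _ G(2)])
  have aT: "a \<in> Tr1 n (Zp av)" using a by (simp add: pclosure_iff_adherent)
  then show "wfm n (minv n a)" by (rule wfm_minv)
  show "adherent n G (minv n a)" unfolding adherent_def
  proof (intro allI impI)
    fix e :: real assume "e > 0"
    define C where "C = fps_bound n (inverse (1 + fps_X)) 1"
    obtain d where d: "d > 0" "C * d \<le> e"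
      using exists_pos_mult_le[of C e] \<open>e > 0\<close> fps_bound_nonneg by (auto simp: C_def)
    obtain g where g: "g \<in> G" "mbound n (msub a g) d"
      using a d by (auto simp: pclosure_iff_adherent adherent_def)
    have gT: "g \<in> Tr1 n (Zp av)" using g G by auto
    obtain g' where "g' \<in> G" "mmul n g g' = mid n" using G g by (auto simp: is_mgroup_def)
    moreover from this have "g' = minv n g"
      using G by (intro right_inverse_eq_minv[OF gT]) (auto simp: is_mgroup_def)
    moreover have "mbound n (msub (minv n a) (minv n g)) (C * d)"
      unfolding C_def using d by (intro minv_lipschitz[OF aT gT g(2)]) simp
    ultimately show "\<exists>g\<in>G. mbound n (msub (minv n a) g) e" using d by (auto intro: mbound_mono)
  qed
qed

lemma mgroup_pclosure:
  assumes "is_mgroup n G" "G \<subseteq> Tr1 n (Zp av)"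
  shows "is_mgroup n (pclosure av n G)"
  unfolding is_mgroup_def
proof (intro conjI ballI)
  show "pclosure av n G \<subseteq> {M. wfm n M}" using pclosure_subset_Tr1_Zp Tr1_imp_wfm by blast
  show "mid n \<in> pclosure av n G" using assms pclosure_superset by (auto simp: is_mgroup_def)
  show "mmul n a b \<in> pclosure av n G" if "a \<in> pclosure av n G" "b \<in> pclosure av n G" for a b
    using assms that by (rule pclosure_mmul)
  show "\<exists>b\<in>pclosure av n G. mmul n a b = mid n" if "a \<in> pclosure av n G" for a
  proof
    show "mmul n a (minv n a) = mid n" using that pclosure_subset_Tr1_Zp by (blast intro: mmul_minv_right)
    show "minv n a \<in> pclosure av n G" using assms that by (rule pclosure_minv)
  qed
qed

lemma mlog_scale_approx:
  assumes g: "g \<in> Tr1 n (Zp av)" "\<gamma> \<in> Tr1 n (Zp av)" "mbound n (msub g \<gamma>) d"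
    and u: "av u \<le> 1" "av (u - of_nat m) \<le> d" and "0 \<le> d"
  shows "mbound n (msub (\<lambda>i j. u * mlog n g i j) (\<lambda>i j. of_nat m * mlog n \<gamma> i j))
           (fps_bound n (fps_ln 1) 1 * d)"
  unfolding mbound_def
proof (intro allI impI)
  fix i j assume ij: "i < n" "j < n"
  let ?C = "fps_bound n (fps_ln 1) 1"
  have "msub (\<lambda>i j. u * mlog n g i j) (\<lambda>i j. of_nat m * mlog n \<gamma> i j) i j
      = u * msub (mlog n g) (mlog n \<gamma>) i j + (u - of_nat m) * mlog n \<gamma> i j"
    by (simp add: msub_def algebra_simps)
  moreover have "av (u * msub (mlog n g) (mlog n \<gamma>) i j) \<le> ?C * d"
  proof -
    have "av (msub (mlog n g) (mlog n \<gamma>) i j) \<le> ?C * d"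
      using mlog_lipschitz[OF g \<open>0 \<le> d\<close>] ij by (simp add: mbound_def)
    moreover have "av u * av (msub (mlog n g) (mlog n \<gamma>) i j) \<le> av (msub (mlog n g) (mlog n \<gamma>) i j)"
      using u(1) by (intro mult_left_le_one_le) auto
    ultimately show ?thesis by (simp add: av_mult)
  qed
  moreover have "av ((u - of_nat m) * mlog n \<gamma> i j) \<le> ?C * d"
  proof -
    have "av (mlog n \<gamma> i j) \<le> ?C" using mbound_mlog[OF g(2)] ij by (simp add: mbound_def)
    then show ?thesis using u(2) \<open>0 \<le> d\<close> by (simp add: av_mult mult.commute[of ?C] mult_mono)
  qed
  ultimately show "av (msub (\<lambda>i j. u * mlog n g i j) (\<lambda>i j. of_nat m * mlog n \<gamma> i j) i j) \<le> ?C * d"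
    by (simp add: av_add_le)
qed

lemma adherent_mexpI:
  assumes approx: "\<And>\<eta>. \<eta> > 0 \<Longrightarrow> \<exists>Y. mexp n Y \<in> S \<and> mbound n Y R \<and> mbound n (msub X Y) \<eta>"
    and X: "mbound n X R" and "1 \<le> R"
  shows "adherent n S (mexp n X)"
  unfolding adherent_def
proof (intro allI impI)
  fix e :: real assume "e > 0"
  define C where "C = fps_bound n (fps_exp 1) R"
  obtain \<eta> where \<eta>: "\<eta> > 0" "C * \<eta> \<le> e"
    using exists_pos_mult_le[of C e] \<open>e > 0\<close> \<open>1 \<le> R\<close> fps_bound_nonneg by (auto simp: C_def)
  obtain Y where Y: "mexp n Y \<in> S" "mbound n Y R" "mbound n (msub X Y) \<eta>" using approx[OF \<eta>(1)] by blast
  have "mbound n (msub (mexp n X) (mexp n Y)) (C * \<eta>)"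
    unfolding C_def using X Y \<open>1 \<le> R\<close> \<eta> by (intro mexp_lipschitz) auto
  then show "\<exists>g\<in>S. mbound n (msub (mexp n X) g) e" using Y(1) \<eta> by (auto intro: mbound_mono)
qed

lemma mexp_Zp_multiple_mlog_in_pclosure:
  assumes G: "is_mgroup n G" "G \<subseteq> Tr1 n (Zp av)"
    and g: "g \<in> pclosure av n G" and u: "av u \<le> 1"
  shows "mexp n (\<lambda>i j. u * mlog n g i j) \<in> pclosure av n G"
proof (rule pclosureI[OF _ _ G(2)])
  let ?X = "\<lambda>i j. u * mlog n g i j"
  define CL where "CL = fps_bound n (fps_ln 1) 1"
  define R where "R = max 1 CL"
  have gT: "g \<in> Tr1 n (Zp av)" using g by (simp add: pclosure_iff_adherent)
  then show "wfm n (mexp n ?X)"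
    by (intro wfm_mexp strictly_upper_imp_wfm strictly_upper_scale strictly_upper_mlog)
  have bound: "mbound n (\<lambda>i j. c * mlog n h i j) R" if "h \<in> Tr1 n (Zp av)" "av c \<le> 1" for c h
    using mbound_mlog[OF that(1)] that(2) by (auto simp: R_def CL_def intro: mbound_mono mbound_scale_Zp)
  show "adherent n G (mexp n ?X)"
  proof (rule adherent_mexpI[OF _ bound[OF gT u]])
    fix \<eta> :: real assume "\<eta> > 0"
    obtain d where d: "d > 0" "CL * d \<le> \<eta>"
      using exists_pos_mult_le[of CL \<eta>] \<open>\<eta> > 0\<close> fps_bound_nonneg by (auto simp: CL_def)
    obtain \<gamma> where \<gamma>: "\<gamma> \<in> G" "mbound n (msub g \<gamma>) d"
      using g d by (auto simp: pclosure_iff_adherent adherent_def)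
    have \<gamma>T: "\<gamma> \<in> Tr1 n (Zp av)" using \<gamma> G by auto
    obtain m :: nat where m: "av (u - of_nat m) < d" using nat_dense_in_Zp[OF u d(1)] by auto
    let ?Y = "\<lambda>i j. of_nat m * mlog n \<gamma> i j"
    have "mexp n ?Y = mpow n \<gamma> m"
      using mpow_mexp[OF strictly_upper_mlog[OF \<gamma>T], of m] mexp_mlog[OF \<gamma>T] by simp
    then have "mexp n ?Y \<in> G" using mgroup_mpow[OF G(1) \<gamma>(1)] by simp
    moreover have "mbound n (msub ?X ?Y) \<eta>"
      using mlog_scale_approx[OF gT \<gamma>T \<gamma>(2) u less_imp_le[OF m]] d
      by (auto simp: CL_def intro: mbound_mono)
    ultimately show "\<exists>Y. mexp n Y \<in> G \<and> mbound n Y R \<and> mbound n (msub ?X Y) \<eta>"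
      using bound[OF \<gamma>T av_of_nat_le_1] by blast
  qed (simp add: R_def)
qed

end


section \<open>Rational dual families\<close>

definition rat_smult :: "rat \<Rightarrow> 'k::field_char_0 sqm \<Rightarrow> 'k sqm" where
  "rat_smult q M = (\<lambda>i j. of_rat q * M i j)"

lemma vector_space_rat_smult: "vector_space (rat_smult :: rat \<Rightarrow> 'k::field_char_0 sqm \<Rightarrow> 'k sqm)"
  unfolding vector_space_def rat_smult_def
  by (auto simp: fun_eq_iff algebra_simps of_rat_add of_rat_mult)

lemma module_rat_smult: "module (rat_smult :: rat \<Rightarrow> 'k::field_char_0 sqm \<Rightarrow> 'k sqm)"
  unfolding module_def rat_smult_def
  by (auto simp: fun_eq_iff algebra_simps of_rat_add of_rat_mult)

lemma vector_space_rat_mult: "vector_space ((*) :: rat \<Rightarrow> rat \<Rightarrow> rat)"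
  unfolding vector_space_def by (auto simp: algebra_simps)

lemma rat_common_denominator:
  assumes "finite T"
  shows "\<exists>D::int. D > 0 \<and> (\<forall>v\<in>T. of_int D * u v \<in> (\<int> :: rat set))"
proof -
  define D where "D = (\<Prod>v\<in>T. snd (quotient_of (u v)))"
  have "D > 0" unfolding D_def
    by (intro prod_pos) (metis prod.collapse quotient_of_denom_pos)
  moreover have "of_int D * u v \<in> (\<int> :: rat set)" if v: "v \<in> T" for v
  proof -
    obtain a b where ab: "quotient_of (u v) = (a, b)" by (cases "quotient_of (u v)") auto
    have "b dvd D"
      unfolding D_def using dvd_prodI[OF assms v, of "\<lambda>v. snd (quotient_of (u v))"] ab by simp
    then obtain k where k: "D = b * k" by (auto elim: dvdE)
    have "b \<noteq> 0" using quotient_of_denom_pos[OF ab] by simp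
    then have "of_int D * u v = of_int (k * a)"
      using quotient_of_div[OF ab] k by (simp add: field_simps)
    then show ?thesis by simp
  qed
  ultimately show ?thesis by blast
qed

lemma Ints_independent_imp_rat_independent:
  fixes B :: "'k::field_char_0 sqm set"
  assumes fin: "finite B" and indep: "c_indep \<int> B"
  shows "\<not> module.dependent (rat_smult :: rat \<Rightarrow> 'k sqm \<Rightarrow> 'k sqm) B"
proof
  assume "module.dependent (rat_smult :: rat \<Rightarrow> 'k sqm \<Rightarrow> 'k sqm) B"
  then obtain T u where Tu: "finite T" "T \<subseteq> B" "(\<Sum>v\<in>T. rat_smult (u v) v) = 0" "\<exists>v\<in>T. u v \<noteq> 0"
    unfolding module.dependent_explicit[OF module_rat_smult] by blast
  obtain D where D: "D > 0" "\<forall>v\<in>T. of_int D * u v \<in> (\<int> :: rat set)"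
    using rat_common_denominator[OF Tu(1)] by blast
  define c where "c v = (if v \<in> T then (of_rat (of_int D * u v) :: 'k) else 0)" for v
  have "\<forall>b\<in>B. c b \<in> \<int>" using D by (auto simp: c_def elim!: Ints_cases)
  moreover have "(\<lambda>i j. \<Sum>b\<in>B. c b * b i j) = (\<lambda>i j. 0)"
  proof (intro ext)
    fix i j
    have "(\<Sum>b\<in>B. c b * b i j) = (\<Sum>b\<in>T. of_rat (of_int D * u b) * b i j)"
      using Tu(2) fin by (intro sum.mono_neutral_cong_right) (auto simp: c_def)
    also have "\<dots> = of_int D * (\<Sum>v\<in>T. rat_smult (u v) v) i j"
      by (simp add: sum_apply2 rat_smult_def sum_distrib_left of_rat_mult mult_ac)
    finally show "(\<Sum>b\<in>B. c b * b i j) = 0" using Tu(3) by simp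
  qed
  ultimately have "\<forall>b\<in>B. c b = 0" using indep by (simp add: c_indep_def)
  moreover obtain v where v: "v \<in> T" "u v \<noteq> 0" using Tu(4) by blast
  ultimately have "c v = 0" using Tu(2) by auto
  then show False using v D(1) by (simp add: c_def)
qed

definition matrix_unit :: "nat \<Rightarrow> nat \<Rightarrow> 'k::field_char_0 sqm" where
  "matrix_unit i j = (\<lambda>a c. if a = i \<and> c = j then 1 else 0)"

lemma wfm_rat_eq_sum_matrix_unit:
  assumes "wfm n M" "\<And>i j. M i j = of_rat (q i j)"
  shows "M = (\<Sum>ij\<in>{..<n} \<times> {..<n}. rat_smult (q (fst ij) (snd ij)) (matrix_unit (fst ij) (snd ij)))"
proof (intro ext)
  fix a c
  have "(\<Sum>ij\<in>{..<n} \<times> {..<n}. rat_smult (q (fst ij) (snd ij)) (matrix_unit (fst ij) (snd ij))) a c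
      = (\<Sum>ij\<in>{..<n} \<times> {..<n}. if ij = (a, c) then of_rat (q a c) else 0)"
    unfolding sum_apply2 by (intro sum.cong) (auto simp: rat_smult_def matrix_unit_def)
  also have "\<dots> = M a c" using assms by (auto simp: wfm_def sum.delta')
  finally show "M a c = (\<Sum>ij\<in>{..<n} \<times> {..<n}. rat_smult (q (fst ij) (snd ij)) (matrix_unit (fst ij) (snd ij))) a c"
    by simp
qed

text \<open>The \<open>\<rat>\<close>-linear coordinate functionals of \<open>B\<close>, extended to all rational matrices, are
represented by their values \<open>dual b i j\<close> on the matrix units.\<close>

lemma rat_dual_family_exists:
  fixes B :: "'k::field_char_0 sqm set"
  assumes fin: "finite B" and wfm: "\<forall>b\<in>B. wfm n b" and rat: "\<forall>b\<in>B. \<forall>i j. b i j \<in> \<rat>"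
    and indep: "c_indep \<int> B"
  shows "\<exists>dual. \<forall>b\<in>B. \<forall>b'\<in>B. (\<Sum>i<n. \<Sum>j<n. dual b i j * b' i j) = (if b = b' then 1 else 0)"
proof -
  have pair: "vector_space_pair (rat_smult :: rat \<Rightarrow> 'k sqm \<Rightarrow> 'k sqm) ((*) :: rat \<Rightarrow> rat \<Rightarrow> rat)"
    unfolding vector_space_pair_def using vector_space_rat_smult vector_space_rat_mult by blast
  have "\<forall>b\<in>B. \<exists>g. Vector_Spaces.linear rat_smult ((*) :: rat \<Rightarrow> rat \<Rightarrow> rat) g
      \<and> (\<forall>x\<in>B. g x = (if b = x then 1 else 0))"
    by (intro ballI vector_space_pair.linear_independent_extend[OF pair
        Ints_independent_imp_rat_independent[OF fin indep]])
  then obtain G where G: "\<forall>b\<in>B. Vector_Spaces.linear rat_smult ((*) :: rat \<Rightarrow> rat \<Rightarrow> rat) (G b)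
      \<and> (\<forall>x\<in>B. G b x = (if b = x then 1 else 0))"
    by (metis bchoice)
  define dual where "dual b i j = (of_rat (G b (matrix_unit i j)) :: 'k)" for b i j
  have "(\<Sum>i<n. \<Sum>j<n. dual b i j * b' i j) = (if b = b' then 1 else 0)" if b: "b \<in> B" "b' \<in> B" for b b'
  proof -
    have "\<forall>i j. \<exists>r. b' i j = of_rat r" using rat b(2) Rats_def by blast
    then obtain q where q: "\<And>i j. b' i j = of_rat (q i j)" by metis
    have hom: "module_hom rat_smult ((*) :: rat \<Rightarrow> rat \<Rightarrow> rat) (G b)"
      using G b(1) module_hom_iff_linear by blast
    have "G b b' = (\<Sum>ij\<in>{..<n} \<times> {..<n}. q (fst ij) (snd ij) * G b (matrix_unit (fst ij) (snd ij)))"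
      by (subst wfm_rat_eq_sum_matrix_unit[OF _ q]) (use wfm b in \<open>simp_all add: module_hom.sum[OF hom] module_hom.scale[OF hom]\<close>)
    then have "(of_rat (G b b') :: 'k) = (\<Sum>i<n. \<Sum>j<n. dual b i j * b' i j)"
      by (simp add: of_rat_sum of_rat_mult dual_def q mult.commute sum.cartesian_product split_def)
    then show ?thesis using G b by auto
  qed
  then show ?thesis by blast
qed

section \<open>Spans with coefficients in a subring\<close>

lemma cspan_mono: "C \<subseteq> C' \<Longrightarrow> S \<subseteq> S' \<Longrightarrow> cspan C S \<subseteq> cspan C' S'"
  unfolding cspan_def by blast

lemma cspan_base: "1 \<in> C \<Longrightarrow> x \<in> S \<Longrightarrow> x \<in> cspan C S"
  unfolding cspan_def by (rule CollectI, rule exI[of _ "{x}"], rule exI[of _ "\<lambda>_. 1"]) auto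

lemma lincomb_in_cspan: "finite B \<Longrightarrow> \<forall>b\<in>B. m b \<in> C \<Longrightarrow> (\<lambda>i j. \<Sum>b\<in>B. m b * b i j) \<in> cspan C B"
  unfolding cspan_def by blast

lemma cspan_finite_lincomb:
  assumes "finite B" "0 \<in> C" "x \<in> cspan C B"
  shows "\<exists>m. (\<forall>b\<in>B. m b \<in> C) \<and> x = (\<lambda>i j. \<Sum>b\<in>B. m b * b i j)"
proof -
  obtain F c where x: "x = (\<lambda>i j. \<Sum>M\<in>F. c M * M i j)" "finite F" "F \<subseteq> B" "\<forall>M\<in>F. c M \<in> C"
    using assms(3) unfolding cspan_def by blast
  define m where "m b = (if b \<in> F then c b else 0)" for b
  have "x = (\<lambda>i j. \<Sum>b\<in>B. m b * b i j)"
    unfolding x(1) m_def using x(2,3) assms(1) by (intro ext sum.mono_neutral_cong_left) auto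
  moreover have "\<forall>b\<in>B. m b \<in> C" using x(4) assms(2) by (auto simp: m_def)
  ultimately show ?thesis by blast
qed

lemma cspan_minimal:
  assumes zero: "(\<lambda>i j. 0) \<in> V"
    and add: "\<And>x y. x \<in> V \<Longrightarrow> y \<in> V \<Longrightarrow> (\<lambda>i j. x i j + y i j) \<in> V"
    and scale: "\<And>c x. c \<in> C \<Longrightarrow> x \<in> V \<Longrightarrow> (\<lambda>i j. c * x i j) \<in> V"
    and S: "S \<subseteq> V"
  shows "cspan C S \<subseteq> V"
proof
  fix x assume "x \<in> cspan C S"
  then obtain F c where x: "x = (\<lambda>i j. \<Sum>M\<in>F. c M * M i j)" "finite F" "F \<subseteq> S" "\<forall>M\<in>F. c M \<in> C"
    unfolding cspan_def by blast
  have "finite F \<Longrightarrow> F \<subseteq> S \<Longrightarrow> (\<forall>M\<in>F. c M \<in> C) \<Longrightarrow> (\<lambda>i j. \<Sum>M\<in>F. c M * M i j) \<in> V"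
  proof (induct F rule: finite_induct)
    case empty
    then show ?case using zero by simp
  next
    case (insert M F)
    then have "(\<lambda>i j. c M * M i j) \<in> V" "(\<lambda>i j. \<Sum>M\<in>F. c M * M i j) \<in> V"
      using S by (auto intro: scale)
    then show ?case using add insert by fastforce
  qed
  then show "x \<in> V" using x by simp
qed

lemma cspan_zero: "0 \<in> C \<Longrightarrow> (\<lambda>i j. 0) \<in> cspan C S"
  unfolding cspan_def by (rule CollectI, rule exI[of _ "{}"]) auto

lemma cspan_add:
  assumes C: "0 \<in> C" "\<And>a b. a \<in> C \<Longrightarrow> b \<in> C \<Longrightarrow> a + b \<in> C"
    and x: "x \<in> cspan C S" and y: "y \<in> cspan C S"
  shows "(\<lambda>i j. x i j + y i j) \<in> cspan C S"
proof -
  obtain F1 c1 where 1: "x = (\<lambda>i j. \<Sum>M\<in>F1. c1 M * M i j)" "finite F1" "F1 \<subseteq> S" "\<forall>M\<in>F1. c1 M \<in> C"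
    using x unfolding cspan_def by blast
  obtain F2 c2 where 2: "y = (\<lambda>i j. \<Sum>M\<in>F2. c2 M * M i j)" "finite F2" "F2 \<subseteq> S" "\<forall>M\<in>F2. c2 M \<in> C"
    using y unfolding cspan_def by blast
  define c where "c M = (if M \<in> F1 then c1 M else 0) + (if M \<in> F2 then c2 M else 0)" for M
  have "(\<lambda>i j. x i j + y i j) = (\<lambda>i j. \<Sum>M\<in>F1 \<union> F2. c M * M i j)"
  proof (intro ext)
    fix i j
    have e1: "(\<Sum>M\<in>F1 \<union> F2. (if M \<in> F1 then c1 M else 0) * M i j) = (\<Sum>M\<in>F1. c1 M * M i j)"
      using 1 2 by (intro sum.mono_neutral_cong_right) auto
    have e2: "(\<Sum>M\<in>F1 \<union> F2. (if M \<in> F2 then c2 M else 0) * M i j) = (\<Sum>M\<in>F2. c2 M * M i j)"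
      using 1 2 by (intro sum.mono_neutral_cong_right) auto
    show "x i j + y i j = (\<Sum>M\<in>F1 \<union> F2. c M * M i j)"
      unfolding c_def distrib_right sum.distrib e1 e2 using 1 2 by simp
  qed
  moreover have "\<forall>M\<in>F1 \<union> F2. c M \<in> C" using 1 2 C by (auto simp: c_def)
  ultimately show ?thesis using 1 2 unfolding cspan_def by blast
qed

lemma cspan_scale:
  assumes C: "\<And>a b. a \<in> C \<Longrightarrow> b \<in> C \<Longrightarrow> a * b \<in> C"
    and c: "c \<in> C" and x: "x \<in> cspan C S"
  shows "(\<lambda>i j. c * x i j) \<in> cspan C S"
proof -
  obtain F d where 1: "x = (\<lambda>i j. \<Sum>M\<in>F. d M * M i j)" "finite F" "F \<subseteq> S" "\<forall>M\<in>F. d M \<in> C"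
    using x unfolding cspan_def by blast
  have "(\<lambda>i j. c * x i j) = (\<lambda>i j. \<Sum>M\<in>F. (c * d M) * M i j)"
    using 1 by (simp add: sum_distrib_left mult.assoc)
  moreover have "\<forall>M\<in>F. c * d M \<in> C" using 1 C c by auto
  ultimately show ?thesis using 1 unfolding cspan_def
    by (intro CollectI exI[of _ F] exI[of _ "\<lambda>M. c * d M"]) auto
qed

lemma cspan_cspan_subset:
  assumes "0 \<in> C" "\<And>a b. a \<in> C \<Longrightarrow> b \<in> C \<Longrightarrow> a + b \<in> C" "\<And>a b. a \<in> C \<Longrightarrow> b \<in> C \<Longrightarrow> a * b \<in> C"
  shows "cspan C (cspan C S) \<subseteq> cspan C S"
  by (rule cspan_minimal) (auto intro: cspan_zero cspan_add cspan_scale assms)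


context padic
begin

lemma Lie_L_zero: "(\<lambda>i j. 0) \<in> Lie_L n G"
  unfolding Lie_L_def by (rule cspan_zero) simp

lemma Lie_L_add: "x \<in> Lie_L n G \<Longrightarrow> y \<in> Lie_L n G \<Longrightarrow> (\<lambda>i j. x i j + y i j) \<in> Lie_L n G"
  unfolding Lie_L_def by (rule cspan_add) auto

lemma Lie_L_rat_scale: "q \<in> \<rat> \<Longrightarrow> x \<in> Lie_L n G \<Longrightarrow> (\<lambda>i j. q * x i j) \<in> Lie_L n G"
  unfolding Lie_L_def by (rule cspan_scale) auto

text \<open>After scaling \<open>c\<close> into \<open>\<int>\<^sub>p\<close> by a power of \<open>p\<close>, \<open>c log g\<close> becomes a rational multiple of
the logarithm of the \<open>\<int>\<^sub>p\<close>-power \<open>exp (p\<^sup>K c log g)\<close> of \<open>g\<close>.\<close>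

lemma Lie_L_pclosure_scale_mlog:
  assumes G: "is_mgroup n G" "G \<subseteq> Tr1 n (Zp av)" and g: "g \<in> pclosure av n G"
  shows "(\<lambda>i j. c * mlog n g i j) \<in> Lie_L n (pclosure av n G)"
proof -
  have gT: "g \<in> Tr1 n (Zp av)" using g pclosure_subset_Tr1_Zp by blast
  obtain K where K: "av (of_nat (p ^ K) * c) \<le> 1" using p_power_scale_into_Zp by blast
  define u where "u = of_nat (p ^ K) * c"
  have "mexp n (\<lambda>i j. u * mlog n g i j) \<in> pclosure av n G"
    using K by (intro mexp_Zp_multiple_mlog_in_pclosure[OF G g]) (simp add: u_def)
  moreover have "mlog n (mexp n (\<lambda>i j. u * mlog n g i j)) = (\<lambda>i j. u * mlog n g i j)"
    by (intro mlog_mexp strictly_upper_scale strictly_upper_mlog[OF gT])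
  ultimately have "(\<lambda>i j. u * mlog n g i j) \<in> Lie_L n (pclosure av n G)"
    unfolding Lie_L_def by (metis cspan_base image_eqI Rats_1)
  then have "(\<lambda>i j. (1 / of_nat (p ^ K)) * (u * mlog n g i j)) \<in> Lie_L n (pclosure av n G)"
    using Lie_L_rat_scale[of "1 / of_nat (p ^ K)" "\<lambda>i j. u * mlog n g i j"] by simp
  then show ?thesis using p_gt_1 by (simp add: u_def)
qed

lemma Lie_L_pclosure_scale:
  assumes G: "is_mgroup n G" "G \<subseteq> Tr1 n (Zp av)" and x: "x \<in> Lie_L n (pclosure av n G)"
  shows "(\<lambda>i j. c * x i j) \<in> Lie_L n (pclosure av n G)"
proof -
  let ?L = "Lie_L n (pclosure av n G)"
  have "qspan (mlog n ` pclosure av n G) \<subseteq> {x. \<forall>c. (\<lambda>i j. c * x i j) \<in> ?L}"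
  proof (rule cspan_minimal)
    show "(\<lambda>i j. x i j + y i j) \<in> {x. \<forall>c. (\<lambda>i j. c * x i j) \<in> ?L}"
      if "x \<in> {x. \<forall>c. (\<lambda>i j. c * x i j) \<in> ?L}" "y \<in> {x. \<forall>c. (\<lambda>i j. c * x i j) \<in> ?L}" for x y
      using that Lie_L_add[of "\<lambda>i j. c * x i j" n _ "\<lambda>i j. c * y i j" for c]
      by (simp add: distrib_left)
  qed (auto simp: Lie_L_zero Lie_L_pclosure_scale_mlog[OF G] mult.assoc[symmetric])
  then show ?thesis using x unfolding Lie_L_def by auto
qed

end

section \<open>The lattice spanned by the logarithms of \<open>\<Delta>\<close>\<close>

locale integral_log_basis = padic p av for p and av :: "'k::field_char_0 \<Rightarrow> real" +
  fixes n :: nat and Gamma Delta B :: "'k sqm set" and dual :: "'k sqm \<Rightarrow> 'k sqm"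
  assumes Gamma_group: "is_mgroup n Gamma" and Delta_group: "is_mgroup n Delta"
    and Gamma_subset_Delta: "Gamma \<subseteq> Delta" and Delta_Tr1: "Delta \<subseteq> Tr1 n \<int>"
    and qspan_mlog_Delta: "qspan (mlog n ` Delta) = Lie_L n Gamma"
    and basis_finite: "finite B" and mlog_Delta_eq_zspan: "mlog n ` Delta = zspan B"
    and dual: "b \<in> B \<Longrightarrow> b' \<in> B \<Longrightarrow> (\<Sum>i<n. \<Sum>j<n. dual b i j * b' i j) = (if b = b' then 1 else 0)"
begin

lemma Delta_Tr1_Zp: "Delta \<subseteq> Tr1 n (Zp av)"
  using Delta_Tr1 Tr1_Ints_subset_Tr1_Zp by blast

lemma Gamma_Tr1_Zp: "Gamma \<subseteq> Tr1 n (Zp av)"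
  using Gamma_subset_Delta Delta_Tr1_Zp by blast

lemma basis_subset: "B \<subseteq> mlog n ` Delta"
  using mlog_Delta_eq_zspan cspan_base[of "\<int>"] by auto

lemma basis_strictly_upper: "b \<in> B \<Longrightarrow> strictly_upper n b"
  using basis_subset Delta_Tr1 strictly_upper_mlog by blast

lemma basis_mbound: "b \<in> B \<Longrightarrow> mbound n b (fps_bound n (fps_ln 1) 1)"
  using basis_subset Delta_Tr1_Zp mbound_mlog by blast

definition lincomb :: "('k sqm \<Rightarrow> 'k) \<Rightarrow> 'k sqm" where
  "lincomb c = (\<lambda>i j. \<Sum>b\<in>B. c b * b i j)"

definition coord :: "'k sqm \<Rightarrow> 'k sqm \<Rightarrow> 'k" where
  "coord b X = (\<Sum>i<n. \<Sum>j<n. dual b i j * X i j)"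

definition dual_bound :: real where
  "dual_bound = (\<Sum>b\<in>B. \<Sum>i<n. \<Sum>j<n. av (dual b i j))"

lemma strictly_upper_lincomb_basis: "strictly_upper n (lincomb c)"
  unfolding lincomb_def by (intro strictly_upper_lincomb basis_strictly_upper)

lemma lincomb_in_cspan_basis: "\<forall>b\<in>B. c b \<in> C \<Longrightarrow> lincomb c \<in> cspan C B"
  unfolding lincomb_def by (rule lincomb_in_cspan[OF basis_finite])

lemma cspan_basis_lincomb: "0 \<in> C \<Longrightarrow> x \<in> cspan C B \<Longrightarrow> \<exists>c. (\<forall>b\<in>B. c b \<in> C) \<and> x = lincomb c"
  unfolding lincomb_def by (rule cspan_finite_lincomb[OF basis_finite])

lemma msub_lincomb: "msub (lincomb c) (lincomb m) = lincomb (\<lambda>b. c b - m b)"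
  by (simp add: msub_def lincomb_def fun_eq_iff left_diff_distrib sum_subtractf)

lemma mbound_lincomb_basis:
  "(\<And>b. b \<in> B \<Longrightarrow> av (c b) \<le> r) \<Longrightarrow> 0 \<le> r \<Longrightarrow> mbound n (lincomb c) (r * fps_bound n (fps_ln 1) 1)"
  unfolding lincomb_def by (rule mbound_lincomb) (auto intro: basis_mbound fps_bound_nonneg)

lemma coord_lincomb: "b \<in> B \<Longrightarrow> coord b (lincomb c) = c b"
proof -
  assume b: "b \<in> B"
  have "coord b (lincomb c) = (\<Sum>i<n. \<Sum>j<n. \<Sum>b'\<in>B. c b' * (dual b i j * b' i j))"
    by (simp add: coord_def lincomb_def sum_distrib_left mult_ac)
  also have "\<dots> = (\<Sum>b'\<in>B. \<Sum>i<n. \<Sum>j<n. c b' * (dual b i j * b' i j))"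
    by (rule sum_swap3[symmetric])
  also have "\<dots> = (\<Sum>b'\<in>B. c b' * (if b = b' then 1 else 0))"
    by (intro sum.cong refl) (simp add: sum_distrib_left[symmetric] dual[OF b])
  also have "\<dots> = (\<Sum>b'\<in>B. if b = b' then c b else 0)"
    by (intro sum.cong) auto
  also have "\<dots> = c b" using b basis_finite by (simp add: sum.delta)
  finally show ?thesis .
qed

lemma coord_msub: "coord b (msub X Y) = coord b X - coord b Y"
  by (simp add: coord_def msub_def sum_subtractf right_diff_distrib)

lemma dual_bound_nonneg: "0 \<le> dual_bound"
  by (simp add: dual_bound_def sum_nonneg)

lemma av_dual_le: "b \<in> B \<Longrightarrow> i < n \<Longrightarrow> j < n \<Longrightarrow> av (dual b i j) \<le> dual_bound"
proof -
  assume b: "b \<in> B" and ij: "i < n" "j < n"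
  have "av (dual b i j) \<le> (\<Sum>j<n. av (dual b i j))" using ij by (intro member_le_sum) auto
  also have "\<dots> \<le> (\<Sum>i<n. \<Sum>j<n. av (dual b i j))"
    using ij by (intro member_le_sum[of i "{..<n}" "\<lambda>i. \<Sum>j<n. av (dual b i j)"]) (auto intro: sum_nonneg)
  also have "\<dots> \<le> dual_bound" unfolding dual_bound_def
    using b basis_finite by (intro member_le_sum[of b B]) (auto intro!: sum_nonneg)
  finally show ?thesis .
qed

lemma av_coord_le: "b \<in> B \<Longrightarrow> mbound n X d \<Longrightarrow> 0 \<le> d \<Longrightarrow> av (coord b X) \<le> dual_bound * d"
  unfolding coord_def mbound_def
  by (intro av_sum_le) (auto simp: av_mult intro!: mult_mono mult_nonneg_nonneg av_dual_le dual_bound_nonneg)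

end


context integral_log_basis
begin

lemma mlog_Delta_p_approx:
  assumes M: "M \<in> pclosure av n Delta" and "e > 0"
  shows "\<exists>m. (\<forall>b\<in>B. m b \<in> \<int>) \<and> mbound n (msub (mlog n M) (lincomb m)) e"
proof -
  define CL where "CL = fps_bound n (fps_ln 1) 1"
  obtain d where d: "d > 0" "CL * d \<le> e"
    using exists_pos_mult_le[of CL e] \<open>e > 0\<close> fps_bound_nonneg by (auto simp: CL_def)
  have MT: "M \<in> Tr1 n (Zp av)" using M by (simp add: pclosure_iff_adherent)
  obtain g where g: "g \<in> Delta" "mbound n (msub M g) d"
    using M d by (auto simp: pclosure_iff_adherent adherent_def)
  have "mbound n (msub (mlog n M) (mlog n g)) e"
    using mlog_lipschitz[OF MT _ g(2)] g(1) Delta_Tr1_Zp d by (auto simp: CL_def intro: mbound_mono)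
  moreover have "mlog n g \<in> zspan B" using g(1) mlog_Delta_eq_zspan by auto
  then obtain m where "\<forall>b\<in>B. m b \<in> \<int>" "mlog n g = lincomb m"
    using cspan_basis_lincomb[of "\<int>"] by auto
  ultimately show ?thesis by auto
qed

lemma coord_mlog_Delta_p_in_Zp:
  assumes M: "M \<in> pclosure av n Delta" and b: "b \<in> B"
  shows "coord b (mlog n M) \<in> Zp av"
proof -
  obtain e where e: "e > 0" "dual_bound * e \<le> 1"
    using exists_pos_mult_le[OF dual_bound_nonneg, of 1] by auto
  obtain m where m: "\<forall>b\<in>B. m b \<in> \<int>" "mbound n (msub (mlog n M) (lincomb m)) e"
    using mlog_Delta_p_approx[OF M e(1)] by blast
  have "av (coord b (mlog n M) - m b) \<le> 1"
    using av_coord_le[OF b m(2)] e by (simp add: coord_msub coord_lincomb[OF b])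
  moreover have "av (m b) \<le> 1" using m(1) b av_Ints_le_1 by auto
  ultimately have "av ((coord b (mlog n M) - m b) + m b) \<le> 1" by (rule av_add_le)
  then show ?thesis by (simp add: Zp_iff)
qed

lemma mlog_Delta_p_eq_lincomb:
  assumes M: "M \<in> pclosure av n Delta"
  shows "mlog n M = lincomb (\<lambda>b. coord b (mlog n M))"
proof (rule mbound_eq)
  let ?X = "mlog n M" and ?c = "\<lambda>b. coord b (mlog n M)"
  show "wfm n ?X" using M pclosure_subset_Tr1_Zp by (blast intro: wfm_mlog Tr1_imp_wfm)
  show "wfm n (lincomb ?c)" by (rule strictly_upper_imp_wfm[OF strictly_upper_lincomb_basis])
  fix e :: real assume "e > 0"
  define CL where "CL = fps_bound n (fps_ln 1) 1"
  have "0 \<le> dual_bound * CL + 1" by (simp add: CL_def dual_bound_nonneg fps_bound_nonneg)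
  then obtain e' where e': "e' > 0" "(dual_bound * CL + 1) * e' \<le> e"
    using exists_pos_mult_le \<open>e > 0\<close> by blast
  moreover have "0 \<le> e' * (dual_bound * CL)"
    using e'(1) dual_bound_nonneg fps_bound_nonneg[of 1 n "fps_ln 1"] by (simp add: CL_def)
  ultimately have "e' \<le> e" "(dual_bound * e') * CL \<le> e" by (simp_all add: algebra_simps)
  obtain m where m: "\<forall>b\<in>B. m b \<in> \<int>" "mbound n (msub ?X (lincomb m)) e'"
    using mlog_Delta_p_approx[OF M e'(1)] by blast
  have "mbound n (lincomb (\<lambda>b. m b - ?c b)) ((dual_bound * e') * CL)"
    unfolding CL_def
  proof (rule mbound_lincomb_basis)
    fix b assume b: "b \<in> B"
    show "av (m b - ?c b) \<le> dual_bound * e'"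
      using av_coord_le[OF b m(2)] e' by (simp add: coord_msub coord_lincomb[OF b] av_minus_commute)
  qed (use dual_bound_nonneg e' in simp)
  moreover have "msub ?X (lincomb ?c) = (\<lambda>i j. msub ?X (lincomb m) i j + lincomb (\<lambda>b. m b - ?c b) i j)"
    by (simp add: msub_def lincomb_def fun_eq_iff left_diff_distrib sum_subtractf)
  ultimately show "mbound n (msub ?X (lincomb ?c)) e"
    using mbound_mono[OF m(2) \<open>e' \<le> e\<close>] mbound_mono[OF _ \<open>(dual_bound * e') * CL \<le> e\<close>]
    by (auto simp: mbound_def intro!: av_add_le)
qed

lemma mexp_lincomb_in_Delta_p:
  assumes c: "\<forall>b\<in>B. av (c b) \<le> 1"
  shows "mexp n (lincomb c) \<in> pclosure av n Delta"
proof (rule pclosureI[OF _ _ Delta_Tr1_Zp])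
  define CL where "CL = fps_bound n (fps_ln 1) 1"
  define R where "R = max 1 CL"
  show "wfm n (mexp n (lincomb c))"
    by (intro wfm_mexp strictly_upper_imp_wfm strictly_upper_lincomb_basis)
  have bound: "mbound n (lincomb c') R" if "\<forall>b\<in>B. av (c' b) \<le> 1" for c'
    using mbound_lincomb_basis[of c' 1] that by (auto simp: R_def CL_def intro: mbound_mono)
  show "adherent n Delta (mexp n (lincomb c))"
  proof (rule adherent_mexpI[OF _ bound[OF c]])
    fix \<eta> :: real assume "\<eta> > 0"
    obtain d where d: "d > 0" "d * CL \<le> \<eta>"
      using exists_pos_mult_le[of CL \<eta>] \<open>\<eta> > 0\<close> fps_bound_nonneg by (auto simp: CL_def mult.commute)
    have "\<forall>b\<in>B. \<exists>k::nat. av (c b - of_nat k) < d" using c nat_dense_in_Zp[OF _ d(1)] by blast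
    then obtain k where k: "\<forall>b\<in>B. av (c b - of_nat (k b)) < d" by (metis bchoice)
    define m where "m b = (of_nat (k b) :: 'k)" for b
    have "lincomb m \<in> zspan B" by (rule lincomb_in_cspan_basis) (simp add: m_def)
    then obtain g where g: "g \<in> Delta" "lincomb m = mlog n g" using mlog_Delta_eq_zspan by auto
    then have "mexp n (lincomb m) \<in> Delta" using mexp_mlog[of g n \<int>] Delta_Tr1 by auto
    moreover have "mbound n (lincomb (\<lambda>b. c b - m b)) (d * CL)"
      unfolding CL_def using k d by (intro mbound_lincomb_basis) (auto simp: m_def less_imp_le)
    then have "mbound n (msub (lincomb c) (lincomb m)) \<eta>"
      using d by (auto simp: msub_lincomb intro: mbound_mono)
    ultimately show "\<exists>Y. mexp n Y \<in> Delta \<and> mbound n Y R \<and> mbound n (msub (lincomb c) Y) \<eta>"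
      using bound[of m] by (auto simp: m_def av_of_nat_le_1)
  qed (simp add: R_def)
qed

lemma mlog_Delta_p_eq_Zp_span_basis: "mlog n ` pclosure av n Delta = cspan (Zp av) B"
proof
  show "mlog n ` pclosure av n Delta \<subseteq> cspan (Zp av) B"
    using mlog_Delta_p_eq_lincomb coord_mlog_Delta_p_in_Zp lincomb_in_cspan_basis by (metis image_subsetI)
  show "cspan (Zp av) B \<subseteq> mlog n ` pclosure av n Delta"
  proof
    fix x assume "x \<in> cspan (Zp av) B"
    then obtain c where c: "\<forall>b\<in>B. c b \<in> Zp av" "x = lincomb c"
      using cspan_basis_lincomb Zp_subring(1) by blast
    then have "mexp n x \<in> pclosure av n Delta"
      by (auto simp: Zp_iff intro: mexp_lincomb_in_Delta_p)
    moreover have "mlog n (mexp n x) = x" using c by (simp add: mlog_mexp strictly_upper_lincomb_basis)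
    ultimately show "x \<in> mlog n ` pclosure av n Delta" by (metis image_eqI)
  qed
qed

lemma Zp_span_mlog_Delta_eq_Zp_span_basis: "cspan (Zp av) (mlog n ` Delta) = cspan (Zp av) B"
proof
  show "cspan (Zp av) B \<subseteq> cspan (Zp av) (mlog n ` Delta)"
    by (rule cspan_mono[OF order_refl basis_subset])
  have "mlog n ` Delta \<subseteq> cspan (Zp av) B"
    unfolding mlog_Delta_eq_zspan using Ints_subset_Zp by (intro cspan_mono) auto
  then have "cspan (Zp av) (mlog n ` Delta) \<subseteq> cspan (Zp av) (cspan (Zp av) B)"
    by (rule cspan_mono[OF order_refl])
  also have "\<dots> \<subseteq> cspan (Zp av) B" by (rule cspan_cspan_subset) (auto intro: Zp_subring)
  finally show "cspan (Zp av) (mlog n ` Delta) \<subseteq> cspan (Zp av) B" .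
qed

lemma mlog_Delta_p_eq_Zp_span: "mlog n ` pclosure av n Delta = cspan (Zp av) (mlog n ` Delta)"
  using mlog_Delta_p_eq_Zp_span_basis Zp_span_mlog_Delta_eq_Zp_span_basis by simp

lemma Zp_span_mlog_Delta_subset_Lie_L: "cspan (Zp av) (mlog n ` Delta) \<subseteq> Lie_L n (pclosure av n Gamma)"
proof (rule cspan_minimal)
  have "mlog n ` Delta \<subseteq> Lie_L n Gamma"
    using qspan_mlog_Delta cspan_base[of "\<rat>" _ "mlog n ` Delta"] by auto
  also have "\<dots> \<subseteq> Lie_L n (pclosure av n Gamma)"
    unfolding Lie_L_def using pclosure_superset[OF Gamma_Tr1_Zp] by (intro cspan_mono) auto
  finally show "mlog n ` Delta \<subseteq> Lie_L n (pclosure av n Gamma)" .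
qed (auto intro: Lie_L_zero Lie_L_add Lie_L_pclosure_scale[OF Gamma_group Gamma_Tr1_Zp])

lemma Zp_lattice_mlog_Delta_p:
  "is_lattice_in (Zp av) UNIV (mlog n ` pclosure av n Delta) (Lie_L n (pclosure av n Gamma))"
  unfolding is_lattice_in_def
proof (intro exI[of _ B] conjI)
  show "c_indep (Zp av) B" unfolding c_indep_def
  proof (intro allI impI ballI)
    fix c b assume "(\<lambda>i j. \<Sum>b\<in>B. c b * b i j) = (\<lambda>i j. 0)" and b: "b \<in> B"
    then have "coord b (lincomb c) = coord b (\<lambda>i j. 0)" by (simp add: lincomb_def)
    then have "c b = coord b (\<lambda>i j. 0)" by (simp only: coord_lincomb[OF b])
    then show "c b = 0" by (simp add: coord_def)
  qed
  show "cspan UNIV (mlog n ` pclosure av n Delta) = Lie_L n (pclosure av n Gamma)"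
  proof
    show "cspan UNIV (mlog n ` pclosure av n Delta) \<subseteq> Lie_L n (pclosure av n Gamma)"
      using mlog_Delta_p_eq_Zp_span Zp_span_mlog_Delta_subset_Lie_L
      by (intro cspan_minimal) (auto intro: Lie_L_zero Lie_L_add Lie_L_pclosure_scale[OF Gamma_group Gamma_Tr1_Zp])
    show "Lie_L n (pclosure av n Gamma) \<subseteq> cspan UNIV (mlog n ` pclosure av n Delta)"
      unfolding Lie_L_def using pclosure_mono[OF Gamma_subset_Delta] by (intro cspan_mono) auto
  qed
qed (use basis_finite mlog_Delta_p_eq_Zp_span_basis in auto)

lemma Delta_p_subset_Mal_R: "pclosure av n Delta \<subseteq> Mal_R n (pclosure av n Gamma)"
proof
  fix M assume M: "M \<in> pclosure av n Delta"
  then have "mlog n M \<in> Lie_L n (pclosure av n Gamma)"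
    using mlog_Delta_p_eq_Zp_span Zp_span_mlog_Delta_subset_Lie_L by auto
  moreover have "mexp n (mlog n M) = M" using M pclosure_subset_Tr1_Zp mexp_mlog by blast
  ultimately show "M \<in> Mal_R n (pclosure av n Gamma)" unfolding Mal_R_def by (metis image_eqI)
qed

end

theorem lemma2p16:
  fixes n p :: nat and av :: "'k::field_char_0 \<Rightarrow> real"
    and Gamma Delta :: "'k sqm set"
  assumes "prime p" and "padic_absval p av"
    and "Gamma \<subseteq> Tr1 n \<int>" and "is_mgroup n Gamma" and "fin_gen n Gamma"
    and "torsion_free n Gamma" and "nilpotent_mgroup n Gamma"
    and "lattice_hull n Gamma Delta" and "Delta \<subseteq> Tr1 n \<int>"
  shows "mlog n ` pclosure av n Delta = cspan (Zp av) (mlog n ` Delta)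
       \<and> cspan (Zp av) (mlog n ` Delta) \<subseteq> Lie_L n (pclosure av n Gamma)
       \<and> is_lattice_in (Zp av) UNIV (mlog n ` pclosure av n Delta) (Lie_L n (pclosure av n Gamma))
       \<and> is_mgroup n (pclosure av n Gamma) \<and> is_mgroup n (pclosure av n Delta)
       \<and> pclosure av n Gamma \<subseteq> pclosure av n Delta
       \<and> pclosure av n Delta \<subseteq> Mal_R n (pclosure av n Gamma)"
proof -
  obtain B where B: "finite B" "c_indep \<int> B" "mlog n ` Delta = zspan B"
    and qspan: "qspan (mlog n ` Delta) = Lie_L n Gamma"
    using assms(8) unfolding lattice_hull_def is_lattice_in_def by blast
  have "wfm n b \<and> (\<forall>i j. b i j \<in> \<rat>)" if "b \<in> B" for b
  proof -
    have "b \<in> mlog n ` Delta" using B(3) cspan_base[of "\<int>", OF _ that] by simp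
    then obtain M where M: "M \<in> Tr1 n \<int>" "b = mlog n M" using assms(9) by blast
    then show ?thesis using mlog_Tr1_Ints_Rats[OF M(1)] wfm_mlog[OF Tr1_imp_wfm[OF M(1)]] by simp
  qed
  then obtain dual where "\<forall>b\<in>B. \<forall>b'\<in>B. (\<Sum>i<n. \<Sum>j<n. dual b i j * b' i j) = (if b = b' then 1 else 0)"
    using rat_dual_family_exists[OF B(1) _ _ B(2)] by blast
  then interpret integral_log_basis p av n Gamma Delta B dual
    using assms B qspan by unfold_locales (auto simp: lattice_hull_def)
  show ?thesis
    by (intro conjI mlog_Delta_p_eq_Zp_span Zp_span_mlog_Delta_subset_Lie_L Zp_lattice_mlog_Delta_p
        mgroup_pclosure[OF Gamma_group Gamma_Tr1_Zp] mgroup_pclosure[OF Delta_group Delta_Tr1_Zp]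
        pclosure_mono[OF Gamma_subset_Delta] Delta_p_subset_Mal_R)
qed

end
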